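(* In the setting described in the context (Assumptions A and B hold), run the VS-PGR scheme with batch sizes $S_k=\lceil\alpha^{-2}\rho^{-(k+1)}\rceil$ for some $\rho\in(0,1)$, with $\mathbb{E}[\|x_0-x^*\|^2]\le C$ for some $C>0$, and with step size $\alpha\in(0,2\eta/\tilde L^2)$. Then $q\triangleq1-2\alpha\eta+\alpha^2\tilde L^2<1$ and for every $k\ge0$: (i) if $\rho\ne q$, $\mathbb{E}[\|x_k-x^*\|^2]\le C(\rho,q)\max\{\rho,q\}^k$, where $C(\rho,q)\triangleq C+\frac{\alpha^2\nu^2}{\max\{\rho/q,q/\rho\}-1}$; (ii) if $\rho=q$, then for any $\tilde q\in(q,1)$, $\mathbb{E}[\|x_k-x^*\|^2]\le\tilde D\tilde q^k$, where $\tilde D\triangleq C+\frac{\alpha^2\nu^2}{\ln((\tilde q/q)^e)}$.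
   Context: Game: $n$ players; player $i$ chooses $x_i\in\mathbb{R}^{d_i}$, $x=(x_1,\dots,x_n)\in\mathbb{R}^d$, and solves $\min_{x_i} f_i(x_i,x_{-i})+r_i(x_i)$ with $f_i(x)=\mathbb{E}[\psi_i(x;\xi_i)]$, $\xi_i$ a random vector in $\mathbb{R}^{m_i}$. A Nash equilibrium (NE) is $x^*$ such that for each $i$, $x_i^*$ minimizes $f_i(\cdot,x_{-i}^* )+r_i(\cdot)$. Assumption A: for each $i$, (i) $r_i$ is lower semicontinuous and convex with effective domain $\mathcal{R}_i$; (ii) for every $x_{-i}\in\prod_{j\ne i}\mathcal{R}_j$, $f_i(\cdot,x_{-i})$ is continuously differentiable and convex on an open set containing $\mathcal{R}_i$; (iii) for every such $x_{-i}$ and every $\xi_i$, $\psi_i(\cdot,x_{-i};\xi_i)$ is differentiable on an open set containing $\mathcal{R}_i$. Let $\mathcal{R}=\prod_j\mathcal{R}_j$, $G(x)=(\nabla_{x_i}f_i(x))_{i=1}^n$, $\mathrm{prox}_{\alpha r_i}(z)=\arg\min_y(r_i(y)+\frac1{2\alpha}\|y-z\|^2)$. VS-PGR scheme: with $x_{i,0}\in\mathcal{R}_i$, at iteration $k$ each player $i$ draws $S_k$ realizations $\xi_{i,k}^p$ of $\xi_i$ and sets $x_{i,k+1}=\mathrm{prox}_{\alpha r_i}\big[x_{i,k}-\frac{\alpha}{S_k}\sum_{p=1}^{S_k}\nabla_{x_i}\psi_i(x_k;\xi_{i,k}^p)\big]$. Let $\bar w_{k,S_k}=\frac1{S_k}\sum_p(\nabla_{x_i}\psi_i(x_k;\xi_{i,k}^p))_{i}-G(x_k)$,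 $\mathcal{F}_k=\sigma\{x_0,\dots,x_k\}$. Assumption B: (i) $G$ is $L$-Lipschitz on $\mathcal{R}$; (ii) $G$ is $\eta$-strongly monotone on $\mathcal{R}$: $(G(x)-G(y))^T(x-y)\ge\eta\|x-y\|^2$; (iii) there are $\nu_1,\nu_2\ge0$ with $\mathbb{E}[\|\bar w_{k,S_k}\|^2\mid\mathcal{F}_k]\le(\nu_1^2\|x_k\|^2+\nu_2^2)/S_k$ a.s. The NE $x^*$ is unique. Constants: $\tilde L\triangleq\sqrt{1+2(1+2\alpha^2)\nu_1^2+2L^2}$, $\nu^2\triangleq2(1+2\alpha^2)\nu_1^2\|x^*\|^2+(1+2\alpha^2)\nu_2^2$, and $\ln((\tilde q/q)^e)=e\ln(\tilde q/q)$. *)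

theory Defs
  imports "HOL-Probability.Probability"
begin

text \<open>Block structure. The joint decision vector lives in real^'n; the map blk :: 'n => 'p
assigns each coordinate to a player.  Player i's decision x_i is the block of coordinates
with blk j = i.\<close>

definition restr :: "('n \<Rightarrow> 'p) \<Rightarrow> 'p \<Rightarrow> real^'n \<Rightarrow> real^'n" where
  "restr blk i x = (\<chi> j. if blk j = i then x $ j else 0)"

definition embed :: "('n \<Rightarrow> 'p) \<Rightarrow> 'p \<Rightarrow> real^'n \<Rightarrow> real^'n \<Rightarrow> real^'n" where
  "embed blk i u x = (\<chi> j. if blk j = i then u $ j else x $ j)"

definition gradf :: "(real^'n \<Rightarrow> real) \<Rightarrow> real^'n \<Rightarrow> real^'n" where
  "gradf g u = (THE v. (g has_derivative (\<lambda>h. v \<bullet> h)) (at u))"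

text \<open>Partial gradient with respect to block i at x (as a vector supported on block i).\<close>
definition pgrad :: "('n \<Rightarrow> 'p) \<Rightarrow> (real^'n \<Rightarrow> real) \<Rightarrow> 'p \<Rightarrow> real^'n \<Rightarrow> real^'n" where
  "pgrad blk g i x = gradf (\<lambda>u. g (embed blk i u x)) x"

definition Gmap :: "('n \<Rightarrow> 'p) \<Rightarrow> ('p \<Rightarrow> real^'n \<Rightarrow> real) \<Rightarrow> real^'n \<Rightarrow> real^'n" where
  "Gmap blk f x = (\<chi> j. pgrad blk (f (blk j)) (blk j) x $ j)"

definition edom :: "('a \<Rightarrow> ereal) \<Rightarrow> 'a set" where
  "edom r = {x. r x < \<infinity>}"

definition econvex :: "(real^'n \<Rightarrow> ereal) \<Rightarrow> bool" where
  "econvex r \<longleftrightarrow> (\<forall>x y t. 0 < t \<and> t < 1 \<longrightarrow>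
      r (t *\<^sub>R x + (1 - t) *\<^sub>R y) \<le> ereal t * r x + ereal (1 - t) * r y)"

definition elsc :: "(real^'n \<Rightarrow> ereal) \<Rightarrow> bool" where
  "elsc r \<longleftrightarrow> (\<forall>x X. X \<longlonglongrightarrow> x \<longrightarrow> r x \<le> liminf (\<lambda>k. r (X k)))"

definition prox :: "('n \<Rightarrow> 'p) \<Rightarrow> 'p \<Rightarrow> (real^'n \<Rightarrow> ereal) \<Rightarrow> real \<Rightarrow> real^'n \<Rightarrow> real^'n" where
  "prox blk i r \<alpha> z = (THE y. restr blk i y = y \<and>
     (\<forall>y'. restr blk i y' = y' \<longrightarrow>
        r y + ereal ((norm (y - restr blk i z))\<^sup>2 / (2 * \<alpha>))
          \<le> r y' + ereal ((norm (y' - restr blk i z))\<^sup>2 / (2 * \<alpha>))))"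

definition is_NE :: "('n \<Rightarrow> 'p) \<Rightarrow> ('p \<Rightarrow> real^'n \<Rightarrow> real) \<Rightarrow> ('p \<Rightarrow> real^'n \<Rightarrow> ereal)
    \<Rightarrow> real^'n \<Rightarrow> bool" where
  "is_NE blk f r xs \<longleftrightarrow> (\<forall>i u. ereal (f i xs) + r i xs
       \<le> ereal (f i (embed blk i u xs)) + r i (embed blk i u xs))"

definition ghat :: "('n \<Rightarrow> 'p) \<Rightarrow> ('p \<Rightarrow> real^'n \<Rightarrow> 'e \<Rightarrow> real)
    \<Rightarrow> ('p \<Rightarrow> nat \<Rightarrow> nat \<Rightarrow> 'w \<Rightarrow> 'e) \<Rightarrow> (nat \<Rightarrow> nat) \<Rightarrow> nat \<Rightarrow> real^'n \<Rightarrow> 'w \<Rightarrow> real^'n" where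
  "ghat blk \<psi> \<xi> S k x \<omega> = (\<chi> j. (1 / real (S k)) *
      (\<Sum>p<S k. pgrad blk (\<lambda>y. \<psi> (blk j) y (\<xi> (blk j) k p \<omega>)) (blk j) x $ j))"

definition natfilt :: "'w measure \<Rightarrow> (nat \<Rightarrow> 'w \<Rightarrow> real^'n) \<Rightarrow> nat \<Rightarrow> 'w measure" where
  "natfilt M x k = sigma (space M)
     (\<Union>j\<in>{..k}. {x j -` A \<inter> space M | A. A \<in> sets borel})"

end

(* Each player's proximal map satisfies a variational inequality, hence is nonexpansive, and the
   optimality conditions of a Nash equilibrium x* say that x* is a fixed point of the proximal
   gradient map z |-> prox(z - alpha G z).  Lipschitz continuity and strong monotonicity of G make the
   exact step contract squared distances by 1 - 2 alpha eta + alpha^2 L^2; Young's inequality splits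
   off the sampling error, whose conditional second moment is O(1 / S_k) = O(alpha^2 rho^(k+1)) once
   ||x_k||^2 is bounded by 2 ||x_k - x*||^2 + 2 ||x*||^2.  Taking expectations gives
   e_(k+1) <= q e_k + g rho^(k+1), whose solution decays like max(rho, q)^k, and like
   k q^k <= qt^k / (e ln (qt / q)) when rho = q. *)

theory Submission
  imports Defs
begin

section \<open>Block vectors\<close>

lemma restr_nth [simp]: "restr blk i x $ j = (if blk j = i then x $ j else 0)"
  by (simp add: restr_def)

lemma restr_idem [simp]: "restr blk i (restr blk i x) = restr blk i x"
  by (simp add: vec_eq_iff)

lemma restr_diff: "restr blk i (x - y) = restr blk i x - restr blk i y"
  by (simp add: vec_eq_iff)

lemma restr_add: "restr blk i (x + y) = restr blk i x + restr blk i y"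
  by (simp add: vec_eq_iff)

lemma restr_scaleR: "restr blk i (c *\<^sub>R x) = c *\<^sub>R restr blk i x"
  by (simp add: vec_eq_iff)

lemma linear_restr: "linear (restr blk i)"
  by (rule linearI) (simp_all add: restr_add restr_scaleR)

lemma restr_fixed_nth:
  assumes "restr blk i d = d" "blk j \<noteq> i"
  shows "d $ j = 0"
  using arg_cong[OF assms(1), of "\<lambda>v. v $ j"] assms(2) by simp

lemma inner_restr_left:
  fixes a d :: "real^'n::finite"
  assumes "restr blk i d = d"
  shows "restr blk i a \<bullet> d = a \<bullet> d"
  unfolding inner_vec_def
  by (intro sum.cong refl) (use restr_fixed_nth[OF assms] in auto)

lemma power2_norm_eq_sum_restr:
  fixes v :: "real^'n::finite" and blk :: "'n \<Rightarrow> 'p::finite"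
  shows "(norm v)\<^sup>2 = (\<Sum>i\<in>UNIV. (norm (restr blk i v))\<^sup>2)"
proof -
  have "(\<Sum>i\<in>UNIV. (norm (restr blk i v))\<^sup>2)
      = (\<Sum>i\<in>UNIV. \<Sum>j\<in>UNIV. (if blk j = i then v $ j * v $ j else 0))"
    by (simp add: power2_norm_eq_inner inner_vec_def if_distrib cong: if_cong)
  also have "\<dots> = (\<Sum>j\<in>UNIV. \<Sum>i\<in>UNIV. (if blk j = i then v $ j * v $ j else 0))"
    by (rule sum.swap)
  finally show ?thesis by (simp add: power2_norm_eq_inner inner_vec_def)
qed

lemma closed_restr_fixed: "closed {y::real^'n::finite. restr blk i y = y}"
proof -
  have "continuous_on UNIV (restr blk i :: real^'n \<Rightarrow> real^'n)"
    using linear_restr by (intro linear_continuous_on) (simp add: linear_conv_bounded_linear)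
  then show ?thesis
    by (intro closed_Collect_eq) (auto intro: continuous_on_id)
qed

lemma convex_restr_fixed: "convex {y::real^'n::finite. restr blk i y = y}"
  by (rule convexI) (simp add: restr_add restr_scaleR)

lemma embed_self [simp]: "embed blk i x x = x"
  by (simp add: vec_eq_iff embed_def)

lemma restr_embed: "restr blk i (embed blk i u x) = restr blk i u"
  by (simp add: vec_eq_iff embed_def)

lemma embed_add_restr_fixed:
  assumes "restr blk i d = d"
  shows "embed blk i (x + d) x = x + d"
  using restr_fixed_nth[OF assms] by (auto simp: vec_eq_iff embed_def)

lemma restr_Gmap: "restr blk i (Gmap blk f x) = restr blk i (pgrad blk (f i) i x)"
  by (simp add: vec_eq_iff Gmap_def)

section \<open>Lower semicontinuity and gradients\<close>

lemma lsc_attains_min: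
  fixes \<phi> :: "'a::metric_space \<Rightarrow> ereal"
  assumes K: "compact K" "K \<noteq> {}"
    and lsc: "\<And>X y. (\<forall>n. X n \<in> K) \<Longrightarrow> y \<in> K \<Longrightarrow> X \<longlonglongrightarrow> y \<Longrightarrow> \<phi> y \<le> liminf (\<lambda>n. \<phi> (X n))"
  shows "\<exists>p\<in>K. \<forall>y\<in>K. \<phi> p \<le> \<phi> y"
proof -
  obtain u where u: "\<forall>n. u n \<in> \<phi> ` K" "u \<longlonglongrightarrow> Inf (\<phi> ` K)"
    using Inf_as_limit[of "\<phi> ` K"] K by auto
  have "\<forall>n. \<exists>x\<in>K. u n = \<phi> x" using u by auto
  then obtain X where X: "\<And>n. X n \<in> K" "\<And>n. u n = \<phi> (X n)" by metis
  obtain l h where l: "l \<in> K" "strict_mono (h::nat\<Rightarrow>nat)" "(X \<circ> h) \<longlonglongrightarrow> l"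
    using seq_compactE[OF compact_imp_seq_compact[OF K(1)], of X] X by auto
  have "(u \<circ> h) \<longlonglongrightarrow> Inf (\<phi> ` K)" using LIMSEQ_subseq_LIMSEQ u(2) l(2) by blast
  then have "liminf (\<lambda>n. \<phi> ((X \<circ> h) n)) = Inf (\<phi> ` K)"
    using X(2) by (intro lim_imp_Liminf) (auto simp: o_def)
  moreover have "\<phi> l \<le> liminf (\<lambda>n. \<phi> ((X \<circ> h) n))"
    using lsc[of "X \<circ> h" l] l X by auto
  ultimately show ?thesis using l(1) by (metis INF_lower order_trans)
qed

lemma lsc_attains_min_coercive:
  fixes \<phi> :: "'a::heine_borel \<Rightarrow> ereal"
  assumes V: "closed V" "y1 \<in> V"
    and lsc: "\<And>X y. X \<longlonglongrightarrow> y \<Longrightarrow> \<phi> y \<le> liminf (\<lambda>n. \<phi> (X n))"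
    and far: "\<And>y. y \<in> V \<Longrightarrow> R < dist y y1 \<Longrightarrow> \<phi> y1 \<le> \<phi> y"
    and R: "0 \<le> R"
  shows "\<exists>p\<in>V. \<forall>y\<in>V. \<phi> p \<le> \<phi> y"
proof -
  define K where "K = V \<inter> cball y1 R"
  have "compact K" unfolding K_def by (intro closed_Int_compact V compact_cball)
  moreover have y1K: "y1 \<in> K" using V R by (simp add: K_def)
  ultimately obtain p where p: "p \<in> K" "\<forall>y\<in>K. \<phi> p \<le> \<phi> y"
    using lsc_attains_min[of K \<phi>] lsc by blast
  have "\<phi> p \<le> \<phi> y" if "y \<in> V" for y
  proof (cases "y \<in> K")
    case False
    then have "\<phi> y1 \<le> \<phi> y" using far that by (auto simp: K_def dist_commute)
    then show ?thesis using p y1K order_trans by blast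
  qed (use p in blast)
  then show ?thesis using p(1) by (auto simp: K_def)
qed

lemma gradf_has_derivative:
  fixes h :: "real^'n::finite \<Rightarrow> real"
  assumes "h differentiable (at u)"
  shows "(h has_derivative (\<lambda>k. gradf h u \<bullet> k)) (at u)"
proof -
  obtain D where D: "(h has_derivative D) (at u)" using assms by (auto simp: differentiable_def)
  have lin: "linear D" using D has_derivative_linear by blast
  define v where "v = (\<Sum>i\<in>Basis. D i *\<^sub>R i)"
  have "D k = v \<bullet> k" for k
  proof -
    have "D k = D k \<bullet> 1" by simp
    also have "\<dots> = (\<Sum>i\<in>Basis. (k \<bullet> i) * (D i \<bullet> 1))" by (rule Linear_Algebra.linear_componentwise[OF lin])
    also have "\<dots> = v \<bullet> k" by (simp add: v_def inner_sum_left inner_sum_right inner_commute mult.commute)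
    finally show ?thesis .
  qed
  then have Dv: "(h has_derivative (\<lambda>k. v \<bullet> k)) (at u)" using D by (metis (no_types) ext)
  have "gradf h u = v"
    unfolding gradf_def
  proof (rule the_equality)
    fix w assume "(h has_derivative (\<lambda>k. w \<bullet> k)) (at u)"
    then have "(\<lambda>k. w \<bullet> k) = (\<lambda>k. v \<bullet> k)" using Dv has_derivative_unique by blast
    then have "(w - v) \<bullet> (w - v) = 0" by (metis inner_diff_left right_minus_eq)
    then show "w = v" by simp
  qed (rule Dv)
  then show ?thesis using Dv by simp
qed

lemma inner_gradf_ge:
  fixes h :: "real^'n::finite \<Rightarrow> real"
  assumes "h differentiable (at x)"
    and incr: "\<And>t. 0 < t \<Longrightarrow> t < 1 \<Longrightarrow> t * c \<le> h (x + t *\<^sub>R d) - h x"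
  shows "c \<le> gradf h x \<bullet> d"
proof -
  define g where "g = (\<lambda>t::real. h (x + t *\<^sub>R d))"
  have "((\<lambda>t::real. x + t *\<^sub>R d) has_derivative (\<lambda>t. t *\<^sub>R d)) (at 0)"
    by (auto intro!: derivative_eq_intros)
  from diff_chain_at[OF this, of h "\<lambda>k. gradf h x \<bullet> k"] gradf_has_derivative[OF assms(1)]
  have "(g has_derivative (\<lambda>t. gradf h x \<bullet> (t *\<^sub>R d))) (at 0)"
    by (simp add: g_def o_def)
  then have "(g has_field_derivative (gradf h x \<bullet> d)) (at 0)"
    by (rule has_derivative_imp_has_field_derivative) simp
  then have "(g has_field_derivative (gradf h x \<bullet> d)) (at 0 within {0<..})"
    by (rule has_field_derivative_at_within)
  then have "((\<lambda>t. (g t - g 0) / (t - 0)) \<longlongrightarrow> gradf h x \<bullet> d) (at_right 0)"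
    by (simp add: has_field_derivative_iff)
  moreover have "eventually (\<lambda>t. c \<le> (g t - g 0) / (t - 0)) (at_right (0::real))"
    by (rule eventually_at_rightI[of 0 1]) (use incr in \<open>auto simp: g_def field_simps\<close>)
  ultimately show ?thesis
    by (intro tendsto_le[OF _ _ tendsto_const]) simp_all
qed

lemma nonneg_if_nonneg_add_small_multiples:
  fixes A B :: real
  assumes "0 \<le> B" "\<And>t. 0 < t \<Longrightarrow> t < 1 \<Longrightarrow> 0 \<le> A + t * B"
  shows "0 \<le> A"
proof -
  have "((\<lambda>t. A + t * B) \<longlongrightarrow> A + 0 * B) (at_right 0)"
    by (intro tendsto_intros)
  moreover have "eventually (\<lambda>t. 0 \<le> A + t * B) (at_right (0::real))"
    by (rule eventually_at_rightI[of 0 1]) (use assms(2) in auto)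
  ultimately show ?thesis
    by (intro tendsto_le[OF _ _ tendsto_const]) simp_all
qed

section \<open>The proximal map of one player\<close>

text \<open>\<open>prox_vi blk i r \<alpha> c p\<close>: the point \<open>p\<close> of block \<open>i\<close> satisfies the variational inequality
  characterising \<open>p = prox\<^sub>\<alpha>\<^sub>r(c)\<close>.\<close>

definition prox_vi ::
    "('n::finite \<Rightarrow> 'p) \<Rightarrow> 'p \<Rightarrow> (real^'n \<Rightarrow> ereal) \<Rightarrow> real \<Rightarrow> real^'n \<Rightarrow> real^'n \<Rightarrow> bool" where
  "prox_vi blk i r \<alpha> c p \<longleftrightarrow> restr blk i p = p \<and> r p < \<infinity> \<and> r p \<noteq> -\<infinity> \<and>
     (\<forall>y. restr blk i y = y \<and> r y < \<infinity> \<longrightarrow>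
        (c - p) \<bullet> (y - p) \<le> \<alpha> * (real_of_ereal (r y) - real_of_ereal (r p)))"

lemma prox_vi_nonexpansive:
  assumes "prox_vi blk i r \<alpha> c1 p1" "prox_vi blk i r \<alpha> c2 p2"
  shows "norm (p1 - p2) \<le> norm (c1 - c2)"
proof -
  have "(c1 - p1) \<bullet> (p2 - p1) \<le> \<alpha> * (real_of_ereal (r p2) - real_of_ereal (r p1))"
    and "(c2 - p2) \<bullet> (p1 - p2) \<le> \<alpha> * (real_of_ereal (r p1) - real_of_ereal (r p2))"
    using assms unfolding prox_vi_def by blast+
  moreover have "(c1 - p1) \<bullet> (p2 - p1) + (c2 - p2) \<bullet> (p1 - p2)
      = (p1 - p2) \<bullet> (p1 - p2) - (c1 - c2) \<bullet> (p1 - p2)"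
    by (simp add: inner_diff_left inner_diff_right inner_commute)
  ultimately have "(norm (p1 - p2))\<^sup>2 \<le> (c1 - c2) \<bullet> (p1 - p2)"
    by (simp add: power2_norm_eq_inner algebra_simps)
  also have "\<dots> \<le> norm (c1 - c2) * norm (p1 - p2)" by (rule norm_cauchy_schwarz)
  finally show ?thesis
    by (cases "norm (p1 - p2) = 0") (auto simp: power2_eq_square mult_le_cancel_right)
qed

lemma prox_vi_of_minimiser:
  fixes r :: "real^'n::finite \<Rightarrow> ereal"
  assumes conv: "econvex r" and \<alpha>: "0 < \<alpha>" and proper: "\<forall>y. r y \<noteq> -\<infinity>"
    and p: "restr blk i p = p" "r p < \<infinity>"
    and min: "\<forall>y. restr blk i y = y \<longrightarrow>
      r p + ereal ((norm (p - c))\<^sup>2 / (2 * \<alpha>)) \<le> r y + ereal ((norm (y - c))\<^sup>2 / (2 * \<alpha>))"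
  shows "prox_vi blk i r \<alpha> c p"
  unfolding prox_vi_def
proof (intro conjI allI impI)
  show "restr blk i p = p" "r p < \<infinity>" "r p \<noteq> -\<infinity>" using p proper by auto
  fix y assume y: "restr blk i y = y \<and> r y < \<infinity>"
  obtain a where a: "r p = ereal a" using p proper by (cases "r p") auto
  obtain b where b: "r y = ereal b" using y proper by (cases "r y") auto
  define d where "d = y - p"
  define u where "u = p - c"
  have small: "0 \<le> (b - a) + (u \<bullet> d) / \<alpha> + t * ((norm d)\<^sup>2 / (2 * \<alpha>))"
    if t: "0 < t" "t < 1" for t
  proof -
    define yt where "yt = t *\<^sub>R y + (1 - t) *\<^sub>R p"
    have "restr blk i yt = yt" using y p by (simp add: yt_def restr_add restr_scaleR)
    then have "r p + ereal ((norm u)\<^sup>2 / (2 * \<alpha>)) \<le> r yt + ereal ((norm (yt - c))\<^sup>2 / (2 * \<alpha>))"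
      using min by (simp add: u_def)
    also have "r yt \<le> ereal t * r y + ereal (1 - t) * r p"
      using conv t unfolding econvex_def yt_def by blast
    then have "r yt + ereal ((norm (yt - c))\<^sup>2 / (2 * \<alpha>))
        \<le> ereal (t * b + (1 - t) * a) + ereal ((norm (yt - c))\<^sup>2 / (2 * \<alpha>))"
      using a b by (intro add_right_mono) simp
    finally have "a + (norm u)\<^sup>2 / (2 * \<alpha>) \<le> t * b + (1 - t) * a + (norm (u + t *\<^sub>R d))\<^sup>2 / (2 * \<alpha>)"
      using a b by (simp add: yt_def u_def d_def algebra_simps)
    moreover have "(norm (u + t *\<^sub>R d))\<^sup>2 = (norm u)\<^sup>2 + 2 * t * (u \<bullet> d) + t\<^sup>2 * (norm d)\<^sup>2"
      unfolding power2_norm_eq_inner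
      by (simp add: inner_add_left inner_add_right inner_commute power2_eq_square algebra_simps)
    ultimately have "0 \<le> t * (b - a) + (2 * t * (u \<bullet> d) + t\<^sup>2 * (norm d)\<^sup>2) / (2 * \<alpha>)"
      by (simp add: add_divide_distrib algebra_simps)
    also have "\<dots> = t * ((b - a) + (u \<bullet> d) / \<alpha> + t * ((norm d)\<^sup>2 / (2 * \<alpha>)))"
      using \<alpha> by (simp add: field_simps power2_eq_square)
    finally show ?thesis using t by (simp add: zero_le_mult_iff)
  qed
  have "0 \<le> (b - a) + (u \<bullet> d) / \<alpha>"
    by (rule nonneg_if_nonneg_add_small_multiples[OF _ small]) (use \<alpha> in simp)
  then have "- (u \<bullet> d) \<le> \<alpha> * (b - a)" using \<alpha> by (simp add: field_simps)
  moreover have "(c - p) \<bullet> (y - p) = - (u \<bullet> d)" by (simp add: u_def d_def inner_diff_left)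
  ultimately show "(c - p) \<bullet> (y - p) \<le> \<alpha> * (real_of_ereal (r y) - real_of_ereal (r p))"
    using a b by simp
qed

lemma econvex_affine_minorant:
  fixes r :: "real^'n::finite \<Rightarrow> ereal"
  assumes conv: "econvex r" and lsc: "elsc r" and proper: "\<forall>y. r y \<noteq> -\<infinity>"
    and V: "closed V" "convex V" "y1 \<in> V" and r0: "r y1 = ereal r0"
  shows "\<exists>K\<ge>0. \<forall>y\<in>V. ereal (r0 - K * (1 + norm (y - y1))) \<le> r y"
proof -
  define B where "B = V \<inter> cball y1 1"
  have "compact B" "B \<noteq> {}" using V by (auto simp: B_def intro!: closed_Int_compact)
  then obtain p where p: "p \<in> B" "\<forall>y\<in>B. r p \<le> r y"
    using lsc_attains_min[of B r] lsc unfolding elsc_def by blast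
  moreover have "y1 \<in> B" using V by (simp add: B_def)
  ultimately obtain m where m: "r p = ereal m" "m \<le> r0"
    using proper r0 by (cases "r p") force+
  have "ereal (r0 - (r0 - m) * (1 + norm (y - y1))) \<le> r y" if y: "y \<in> V" for y
  proof (cases "norm (y - y1) \<le> 1")
    case True
    then have "ereal m \<le> r y" using p m y by (simp add: B_def dist_norm norm_minus_commute)
    moreover have "m * norm (y - y1) \<le> r0 * norm (y - y1)"
      using m by (intro mult_right_mono) auto
    then have "r0 - (r0 - m) * (1 + norm (y - y1)) \<le> m"
      by (simp add: algebra_simps)
    ultimately show ?thesis by (meson ereal_less_eq(3) order_trans)
  next
    case far: False
    show ?thesis
    proof (cases "r y")
      case (real b)
      define s where "s = norm (y - y1)"
      define t where "t = 1 / s"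
      have s1: "1 < s" using far by (simp add: s_def)
      then have t: "0 < t" "t < 1" by (auto simp: t_def)
      define y' where "y' = t *\<^sub>R y + (1 - t) *\<^sub>R y1"
      have "y' \<in> V" using convexD[OF V(2) y V(3)] t by (simp add: y'_def)
      moreover have "y' - y1 = t *\<^sub>R (y - y1)" by (simp add: y'_def algebra_simps)
      then have "norm (y' - y1) = t * s" using t by (simp add: s_def)
      then have "norm (y' - y1) = 1" using s1 by (simp add: t_def)
      ultimately have "ereal m \<le> r y'" using p m by (simp add: B_def dist_norm norm_minus_commute)
      also have "r y' \<le> ereal t * r y + ereal (1 - t) * r y1"
        using conv t unfolding econvex_def y'_def by blast
      finally have "s * m \<le> s * (t * b + (1 - t) * r0)"
        using real r0 s1 by (intro mult_left_mono) auto
      also have "\<dots> = b + (s - 1) * r0" using s1 by (simp add: t_def field_simps)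
      finally show ?thesis using real m s1 by (simp add: s_def algebra_simps)
    qed (use proper in auto)
  qed
  then show ?thesis using m by (intro exI[of _ "r0 - m"]) auto
qed

lemma elsc_add_continuous:
  fixes r :: "real^'n::finite \<Rightarrow> ereal" and g :: "real^'n \<Rightarrow> real"
  assumes lsc: "elsc r" and g: "continuous_on UNIV g"
  shows "elsc (\<lambda>y. r y + ereal (g y))"
  unfolding elsc_def
proof (intro allI impI)
  fix y :: "real^'n" and X :: "nat \<Rightarrow> real^'n"
  assume X: "X \<longlonglongrightarrow> y"
  then have "(\<lambda>n. ereal (g (X n))) \<longlonglongrightarrow> ereal (g y)"
    using g by (intro tendsto_intros) (auto intro: continuous_on_tendsto_compose)
  then have "liminf (\<lambda>n. ereal (g (X n)) + r (X n)) = ereal (g y) + liminf (\<lambda>n. r (X n))"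
    by (rule ereal_liminf_lim_add) simp
  moreover have "r y \<le> liminf (\<lambda>n. r (X n))" using lsc X unfolding elsc_def by blast
  then have "ereal (g y) + r y \<le> ereal (g y) + liminf (\<lambda>n. r (X n))" by (rule add_left_mono)
  ultimately show "r y + ereal (g y) \<le> liminf (\<lambda>n. r (X n) + ereal (g (X n)))"
    by (simp add: add.commute)
qed

lemma quadratic_dominates_affine:
  fixes a d s n :: real
  assumes "0 \<le> a" "0 \<le> d" "d + (1 + a + d\<^sup>2 + a * (1 + d)) < s" "s - d \<le> n"
  shows "d\<^sup>2 + a * (1 + s) \<le> n\<^sup>2"
proof -
  define c where "c = d\<^sup>2 + a * (1 + d)"
  define t where "t = s - d"
  have c: "0 \<le> c" and t: "1 + a + c < t" "t \<le> n"
    using assms by (simp_all add: c_def t_def)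
  then have t1: "1 \<le> t" using \<open>0 \<le> a\<close> by linarith
  have "d\<^sup>2 + a * (1 + s) = c + a * t" by (simp add: c_def t_def algebra_simps)
  also have "\<dots> \<le> t * (c + a)" using mult_right_mono[OF t1 c] by (simp add: algebra_simps)
  also have "\<dots> \<le> t * t" using t t1 by (intro mult_left_mono) auto
  also have "\<dots> \<le> n\<^sup>2" using t t1 by (simp add: power2_eq_square mult_mono)
  finally show ?thesis .
qed

lemma prox_minimiser_exists:
  fixes r :: "real^'n::finite \<Rightarrow> ereal" and blk :: "'n \<Rightarrow> 'p"
  assumes rb: "\<forall>y. r y = r (restr blk i y)" and proper: "\<forall>y. r y \<noteq> -\<infinity>"
    and lsc: "elsc r" and conv: "econvex r" and y0: "r y0 < \<infinity>" and \<alpha>: "0 < \<alpha>"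
  shows "\<exists>p. restr blk i p = p \<and> (\<forall>y. restr blk i y = y \<longrightarrow>
     r p + ereal ((norm (p - c))\<^sup>2 / (2 * \<alpha>)) \<le> r y + ereal ((norm (y - c))\<^sup>2 / (2 * \<alpha>)))"
proof -
  define V where "V = {y::real^'n. restr blk i y = y}"
  define y1 where "y1 = restr blk i y0"
  have y1V: "y1 \<in> V" by (simp add: V_def y1_def)
  obtain r0 where r0: "r y1 = ereal r0"
    using rb y0 proper by (cases "r y1") (auto simp: y1_def)
  have V: "closed V" "convex V" unfolding V_def by (rule closed_restr_fixed convex_restr_fixed)+
  obtain K where K: "0 \<le> K" "\<And>y. y \<in> V \<Longrightarrow> ereal (r0 - K * (1 + norm (y - y1))) \<le> r y"
    using econvex_affine_minorant[OF conv lsc proper V y1V r0] by blast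
  define Q where "Q = (\<lambda>y::real^'n. (norm (y - c))\<^sup>2 / (2 * \<alpha>))"
  define \<phi> where "\<phi> = (\<lambda>y. r y + ereal (Q y))"
  have "elsc \<phi>" unfolding \<phi>_def Q_def
    by (intro elsc_add_continuous lsc continuous_intros) (use \<alpha> in auto)
  define d where "d = norm (y1 - c)"
  define R where "R = d + (1 + 2 * \<alpha> * K + d\<^sup>2 + 2 * \<alpha> * K * (1 + d))"
  have far: "\<phi> y1 \<le> \<phi> y" if y: "y \<in> V" "R < dist y y1" for y
  proof -
    have "norm (y - y1) \<le> norm (y - c) + d"
      using norm_triangle_ineq[of "y - c" "c - y1"] by (simp add: d_def norm_minus_commute)
    then have "d\<^sup>2 + 2 * \<alpha> * K * (1 + norm (y - y1)) \<le> (norm (y - c))\<^sup>2"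
      using quadratic_dominates_affine[of "2 * \<alpha> * K" d "norm (y - y1)" "norm (y - c)"] y K \<alpha>
      by (simp add: R_def d_def dist_norm)
    then have "(d\<^sup>2 + 2 * \<alpha> * K * (1 + norm (y - y1))) / (2 * \<alpha>) \<le> Q y"
      unfolding Q_def using \<alpha> by (intro divide_right_mono) auto
    then have "r0 + d\<^sup>2 / (2 * \<alpha>) \<le> r0 - K * (1 + norm (y - y1)) + Q y"
      using \<alpha> by (simp add: field_simps)
    then have "\<phi> y1 \<le> ereal (r0 - K * (1 + norm (y - y1))) + ereal (Q y)"
      by (simp add: \<phi>_def Q_def r0 d_def)
    also have "\<dots> \<le> \<phi> y" unfolding \<phi>_def by (rule add_right_mono[OF K(2)[OF y(1)]])
    finally show ?thesis .
  qed
  have "0 \<le> d" by (simp add: d_def)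
  then have "0 \<le> R" using K \<alpha> by (simp add: R_def)
  then obtain p where "p \<in> V" "\<forall>y\<in>V. \<phi> p \<le> \<phi> y"
    using lsc_attains_min_coercive[of V y1 \<phi> R, OF V(1) y1V _ far] \<open>elsc \<phi>\<close>
    unfolding elsc_def by blast
  then show ?thesis by (auto simp: V_def \<phi>_def Q_def)
qed

lemma prox_vi_prox:
  fixes r :: "real^'n::finite \<Rightarrow> ereal" and blk :: "'n \<Rightarrow> 'p"
  assumes rb: "\<forall>y. r y = r (restr blk i y)" and proper: "\<forall>y. r y \<noteq> -\<infinity>"
    and lsc: "elsc r" and conv: "econvex r" and y0: "r y0 < \<infinity>" and \<alpha>: "0 < \<alpha>"
  shows "prox_vi blk i r \<alpha> (restr blk i z) (prox blk i r \<alpha> z)"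
proof -
  let ?c = "restr blk i z"
  let ?P = "\<lambda>p. restr blk i p = p \<and> (\<forall>y. restr blk i y = y \<longrightarrow>
     r p + ereal ((norm (p - ?c))\<^sup>2 / (2 * \<alpha>)) \<le> r y + ereal ((norm (y - ?c))\<^sup>2 / (2 * \<alpha>)))"
  have VI: "prox_vi blk i r \<alpha> ?c p" if P: "?P p" for p
  proof (rule prox_vi_of_minimiser[OF conv \<alpha> proper])
    have "r p + ereal ((norm (p - ?c))\<^sup>2 / (2 * \<alpha>))
        \<le> r (restr blk i y0) + ereal ((norm (restr blk i y0 - ?c))\<^sup>2 / (2 * \<alpha>))"
      using P by simp
    also have "\<dots> < \<infinity>"
    proof -
      have "r (restr blk i y0) < \<infinity>" using rb y0 by metis
      then show ?thesis by (cases "r (restr blk i y0)") auto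
    qed
    finally show "r p < \<infinity>" by auto
  qed (use P in auto)
  obtain p where p: "?P p" using prox_minimiser_exists[OF rb proper lsc conv y0 \<alpha>] by blast
  have "?P (prox blk i r \<alpha> z)"
    unfolding prox_def
  proof (rule theI[of ?P p])
    fix q assume "?P q"
    then show "q = p" using prox_vi_nonexpansive[OF VI VI[OF p]] by simp
  qed (rule p)
  then show ?thesis by (rule VI)
qed

section \<open>The proximal gradient map and Nash equilibria\<close>

definition prox_map :: "('n::finite \<Rightarrow> 'p) \<Rightarrow> ('p \<Rightarrow> real^'n \<Rightarrow> ereal) \<Rightarrow> real \<Rightarrow> real^'n \<Rightarrow> real^'n" where
  "prox_map blk r \<alpha> z = (\<chi> j. prox blk (blk j) (r (blk j)) \<alpha> z $ j)"

lemma restr_prox_map: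
  assumes "prox_vi blk i (r i) \<alpha> (restr blk i z) (prox blk i (r i) \<alpha> z)"
  shows "restr blk i (prox_map blk r \<alpha> z) = prox blk i (r i) \<alpha> z"
proof -
  have fixed: "restr blk i (prox blk i (r i) \<alpha> z) = prox blk i (r i) \<alpha> z"
    using assms by (simp add: prox_vi_def)
  have "restr blk i (prox_map blk r \<alpha> z) $ j = prox blk i (r i) \<alpha> z $ j" for j
    using restr_fixed_nth[OF fixed, of j] by (simp add: prox_map_def)
  then show ?thesis by (simp add: vec_eq_iff)
qed

lemma prox_map_in_edom:
  assumes pv: "prox_vi blk i (r i) \<alpha> (restr blk i z) (prox blk i (r i) \<alpha> z)"
    and rb: "\<forall>y. r i y = r i (restr blk i y)"
  shows "prox_map blk r \<alpha> z \<in> edom (r i)"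
proof -
  have "r i (prox_map blk r \<alpha> z) = r i (prox blk i (r i) \<alpha> z)"
    using restr_prox_map[of blk i r, OF pv] rb by metis
  then show ?thesis using pv by (simp add: prox_vi_def edom_def)
qed

lemma lipschitz_prox_map:
  fixes blk :: "'n::finite \<Rightarrow> 'p::finite"
  assumes pv: "\<forall>i z. prox_vi blk i (r i) \<alpha> (restr blk i z) (prox blk i (r i) \<alpha> z)"
  shows "1-lipschitz_on UNIV (prox_map blk r \<alpha>)"
proof (rule lipschitz_onI)
  fix z1 z2
  have "(norm (prox_map blk r \<alpha> z1 - prox_map blk r \<alpha> z2))\<^sup>2
      = (\<Sum>i\<in>UNIV. (norm (restr blk i (prox_map blk r \<alpha> z1 - prox_map blk r \<alpha> z2)))\<^sup>2)"
    by (rule power2_norm_eq_sum_restr)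
  also have "\<dots> \<le> (\<Sum>i\<in>UNIV. (norm (restr blk i (z1 - z2)))\<^sup>2)"
  proof (rule sum_mono)
    fix i
    have "norm (prox blk i (r i) \<alpha> z1 - prox blk i (r i) \<alpha> z2) \<le> norm (restr blk i z1 - restr blk i z2)"
      using prox_vi_nonexpansive pv by metis
    then show "(norm (restr blk i (prox_map blk r \<alpha> z1 - prox_map blk r \<alpha> z2)))\<^sup>2
        \<le> (norm (restr blk i (z1 - z2)))\<^sup>2"
      using restr_prox_map[of blk i r, OF pv[rule_format]] by (simp add: restr_diff power_mono)
  qed
  also have "\<dots> = (norm (z1 - z2))\<^sup>2" by (rule power2_norm_eq_sum_restr[symmetric])
  finally show "dist (prox_map blk r \<alpha> z1) (prox_map blk r \<alpha> z2) \<le> 1 * dist z1 z2"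
    by (simp add: dist_norm power2_le_iff_abs_le)
qed simp

lemma is_NE_in_edom:
  assumes NE: "is_NE blk f r xs" and rb: "\<forall>y. r i y = r i (restr blk i y)"
    and proper: "\<forall>y. r i y \<noteq> -\<infinity>" and y0: "y0 \<in> edom (r i)"
  shows "xs \<in> edom (r i)"
proof (rule ccontr)
  assume "xs \<notin> edom (r i)"
  then have inf: "r i xs = \<infinity>" unfolding edom_def by simp
  have "r i (embed blk i y0 xs) = r i y0" using rb restr_embed by metis
  then have "r i (embed blk i y0 xs) < \<infinity>" using y0 by (simp add: edom_def)
  moreover have "ereal (f i xs) + r i xs \<le> ereal (f i (embed blk i y0 xs)) + r i (embed blk i y0 xs)"
    using NE unfolding is_NE_def by blast
  ultimately show False using inf proper by (cases "r i (embed blk i y0 xs)") auto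
qed

lemma is_NE_first_order:
  fixes blk :: "'n::finite \<Rightarrow> 'p" and f :: "'p \<Rightarrow> real^'n \<Rightarrow> real"
    and r :: "'p \<Rightarrow> real^'n \<Rightarrow> ereal"
  assumes NE: "is_NE blk f r xs" and xs: "xs \<in> edom (r i)"
    and rb: "\<forall>y. r i y = r i (restr blk i y)" and proper: "\<forall>y. r i y \<noteq> -\<infinity>"
    and conv: "econvex (r i)" and diff: "(\<lambda>v. f i (embed blk i v xs)) differentiable (at xs)"
    and y: "restr blk i y = y" "r i y < \<infinity>"
  shows "real_of_ereal (r i xs) - real_of_ereal (r i y) \<le> pgrad blk (f i) i xs \<bullet> (y - restr blk i xs)"
  unfolding pgrad_def
proof (rule inner_gradf_ge[OF diff])
  define ps where "ps = restr blk i xs"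
  define d where "d = y - ps"
  obtain a where a: "r i xs = ereal a" using xs proper by (cases "r i xs") (auto simp: edom_def)
  obtain b where b: "r i y = ereal b" using y proper by (cases "r i y") auto
  have rps: "r i ps = r i xs" using rb by (simp add: ps_def)
  have dV: "restr blk i d = d" using y by (simp add: d_def ps_def restr_diff)
  fix t :: real assume t: "0 < t" "t < 1"
  have "restr blk i (t *\<^sub>R d) = t *\<^sub>R d" using dV by (simp add: restr_scaleR)
  then have e: "embed blk i (xs + t *\<^sub>R d) xs = xs + t *\<^sub>R d" by (rule embed_add_restr_fixed)
  have "restr blk i (xs + t *\<^sub>R d) = ps + t *\<^sub>R d"
    using dV by (simp add: restr_add restr_scaleR ps_def)
  also have "\<dots> = t *\<^sub>R y + (1 - t) *\<^sub>R ps" by (simp add: d_def algebra_simps)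
  finally have "r i (xs + t *\<^sub>R d) = r i (t *\<^sub>R y + (1 - t) *\<^sub>R ps)" using rb by metis
  also have "\<dots> \<le> ereal t * r i y + ereal (1 - t) * r i ps"
    using conv t unfolding econvex_def by blast
  finally have "r i (xs + t *\<^sub>R d) \<le> ereal (t * b + (1 - t) * a)" using a b rps by simp
  moreover have "ereal (f i xs) + r i xs \<le> ereal (f i (xs + t *\<^sub>R d)) + r i (xs + t *\<^sub>R d)"
    using NE e unfolding is_NE_def by metis
  ultimately have "f i xs + a \<le> f i (xs + t *\<^sub>R d) + (t * b + (1 - t) * a)"
    using a by (cases "r i (xs + t *\<^sub>R d)") auto
  then have "t * (a - b) \<le> f i (xs + t *\<^sub>R d) - f i xs" by (simp add: algebra_simps)
  then show "t * (real_of_ereal (r i xs) - real_of_ereal (r i y))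
      \<le> f i (embed blk i (xs + t *\<^sub>R (y - restr blk i xs)) xs) - f i (embed blk i xs xs)"
    unfolding ps_def[symmetric] d_def[symmetric] using a b e by simp
qed

lemma is_NE_prox_vi:
  fixes blk :: "'n::finite \<Rightarrow> 'p" and f :: "'p \<Rightarrow> real^'n \<Rightarrow> real"
    and r :: "'p \<Rightarrow> real^'n \<Rightarrow> ereal"
  assumes NE: "is_NE blk f r xs" and xs: "xs \<in> edom (r i)"
    and rb: "\<forall>y. r i y = r i (restr blk i y)" and proper: "\<forall>y. r i y \<noteq> -\<infinity>"
    and conv: "econvex (r i)"
    and diff: "(\<lambda>v. f i (embed blk i v xs)) differentiable (at xs)" and \<alpha>: "0 < \<alpha>"
  shows "prox_vi blk i (r i) \<alpha> (restr blk i (xs - \<alpha> *\<^sub>R Gmap blk f xs)) (restr blk i xs)"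
  unfolding prox_vi_def
proof (intro conjI allI impI)
  have rps: "r i (restr blk i xs) = r i xs" using rb by simp
  then show "restr blk i (restr blk i xs) = restr blk i xs"
    "r i (restr blk i xs) < \<infinity>" "r i (restr blk i xs) \<noteq> -\<infinity>"
    using xs proper by (auto simp: edom_def)
  fix y assume y: "restr blk i y = y \<and> r i y < \<infinity>"
  define d where "d = y - restr blk i xs"
  have dV: "restr blk i d = d" using y by (simp add: d_def restr_diff)
  have "Gmap blk f xs \<bullet> d = pgrad blk (f i) i xs \<bullet> d"
    using inner_restr_left[OF dV] restr_Gmap by metis
  also have "real_of_ereal (r i xs) - real_of_ereal (r i y) \<le> \<dots>"
    using is_NE_first_order[OF NE xs rb proper conv diff] y by (simp add: d_def)
  finally have "\<alpha> * (real_of_ereal (r i xs) - real_of_ereal (r i y)) \<le> \<alpha> * (Gmap blk f xs \<bullet> d)"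
    using \<alpha> by (intro mult_left_mono) auto
  moreover have "(restr blk i (xs - \<alpha> *\<^sub>R Gmap blk f xs) - restr blk i xs) \<bullet> (y - restr blk i xs)
      = - \<alpha> * (Gmap blk f xs \<bullet> d)"
    using inner_restr_left[OF dV, of "Gmap blk f xs"]
    by (simp add: restr_diff restr_scaleR d_def)
  ultimately show "(restr blk i (xs - \<alpha> *\<^sub>R Gmap blk f xs) - restr blk i xs) \<bullet> (y - restr blk i xs)
      \<le> \<alpha> * (real_of_ereal (r i y) - real_of_ereal (r i (restr blk i xs)))"
    using rps by (simp add: algebra_simps)
qed

lemma is_NE_prox_map_fixed_point:
  fixes blk :: "'n::finite \<Rightarrow> 'p::finite"
  assumes NE: "is_NE blk f r xs" and xs: "\<forall>i. xs \<in> edom (r i)"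
    and rb: "\<forall>i y. r i y = r i (restr blk i y)" and proper: "\<forall>i y. r i y \<noteq> -\<infinity>"
    and conv: "\<forall>i. econvex (r i)"
    and diff: "\<forall>i. (\<lambda>v. f i (embed blk i v xs)) differentiable (at xs)"
    and pv: "\<forall>i z. prox_vi blk i (r i) \<alpha> (restr blk i z) (prox blk i (r i) \<alpha> z)" and \<alpha>: "0 < \<alpha>"
  shows "prox_map blk r \<alpha> (xs - \<alpha> *\<^sub>R Gmap blk f xs) = xs"
proof -
  let ?z = "xs - \<alpha> *\<^sub>R Gmap blk f xs"
  have restr_eq: "restr blk i (prox_map blk r \<alpha> ?z) = restr blk i xs" for i
  proof -
    have "prox_vi blk i (r i) \<alpha> (restr blk i ?z) (restr blk i xs)"
      using is_NE_prox_vi[OF NE] xs rb proper conv diff \<alpha> by blast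
    with pv have "norm (prox blk i (r i) \<alpha> ?z - restr blk i xs) \<le> norm (restr blk i ?z - restr blk i ?z)"
      by (blast intro: prox_vi_nonexpansive)
    then show ?thesis using restr_prox_map[of blk i r, OF pv[rule_format]] by simp
  qed
  have "prox_map blk r \<alpha> ?z $ j = xs $ j" for j
    using arg_cong[OF restr_eq[of "blk j"], of "\<lambda>v. v $ j"] by simp
  then show ?thesis by (simp add: vec_eq_iff)
qed

lemma prox_map_at_NE:
  fixes blk :: "'n::finite \<Rightarrow> 'p::finite"
  assumes NE: "is_NE blk f r xs"
    and rb: "\<forall>i y. r i y = r i (restr blk i y)" and proper: "\<forall>i y. r i y \<noteq> -\<infinity>"
    and lsc: "\<forall>i. elsc (r i)" and conv: "\<forall>i. econvex (r i)" and y0: "\<forall>i. y0 \<in> edom (r i)"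
    and diff: "\<forall>i y. (\<forall>j. j \<noteq> i \<longrightarrow> y \<in> edom (r j)) \<longrightarrow>
      (\<forall>u\<in>edom (r i). (\<lambda>v. f i (embed blk i v y)) differentiable (at u))"
    and \<alpha>: "0 < \<alpha>"
  shows "\<forall>i. xs \<in> edom (r i)" and "\<forall>i. prox_map blk r \<alpha> z \<in> edom (r i)"
    and "1-lipschitz_on UNIV (prox_map blk r \<alpha>)"
    and "prox_map blk r \<alpha> (xs - \<alpha> *\<^sub>R Gmap blk f xs) = xs"
proof -
  show xs: "\<forall>i. xs \<in> edom (r i)" using is_NE_in_edom[OF NE] rb proper y0 by blast
  have pv: "\<forall>i z. prox_vi blk i (r i) \<alpha> (restr blk i z) (prox blk i (r i) \<alpha> z)"
  proof (intro allI)
    fix i z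
    have "r i y0 < \<infinity>" using y0 by (simp add: edom_def)
    then show "prox_vi blk i (r i) \<alpha> (restr blk i z) (prox blk i (r i) \<alpha> z)"
      using rb proper lsc conv \<alpha> by (intro prox_vi_prox) auto
  qed
  show "\<forall>i. prox_map blk r \<alpha> z \<in> edom (r i)"
    using pv rb by (blast intro: prox_map_in_edom)
  show "1-lipschitz_on UNIV (prox_map blk r \<alpha>)" by (rule lipschitz_prox_map[OF pv])
  have "\<forall>i. (\<lambda>v. f i (embed blk i v xs)) differentiable (at xs)" using diff xs by blast
  then show "prox_map blk r \<alpha> (xs - \<alpha> *\<^sub>R Gmap blk f xs) = xs"
    using is_NE_prox_map_fixed_point[OF NE xs rb proper conv _ pv \<alpha>] by blast
qed

section \<open>One step of the scheme\<close>

lemma power2_norm_diff: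
  fixes x y :: "'a::real_inner"
  shows "(norm (x - y))\<^sup>2 = (norm x)\<^sup>2 - 2 * (x \<bullet> y) + (norm y)\<^sup>2"
  by (simp add: power2_norm_eq_inner inner_diff_left inner_diff_right inner_commute)

lemma power2_norm_add_le_weighted:
  fixes x y :: "'a::real_inner"
  assumes t: "0 < t"
  shows "(norm (x + y))\<^sup>2 \<le> (1 + t) * (norm x)\<^sup>2 + (1 + 1 / t) * (norm y)\<^sup>2"
proof -
  have "0 \<le> (norm (t *\<^sub>R x - y))\<^sup>2" by simp
  also have "\<dots> = t * (t * (norm x)\<^sup>2 - 2 * (x \<bullet> y) + (norm y)\<^sup>2 / t)"
    using t unfolding power2_norm_eq_inner
    by (simp add: inner_diff_left inner_diff_right inner_commute field_simps power2_eq_square)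
  finally have "2 * (x \<bullet> y) \<le> t * (norm x)\<^sup>2 + (norm y)\<^sup>2 / t"
    using t by (simp add: zero_le_mult_iff)
  then show ?thesis
    unfolding power2_norm_eq_inner
    by (simp add: inner_add_left inner_add_right inner_commute algebra_simps add_divide_distrib)
qed

text \<open>The Peter--Paul weight \<open>\<alpha>\<^sup>2 (1 + L\<^sup>2) / P\<close> keeps the noise coefficient
  \<open>\<alpha>\<^sup>2 + P / (1 + L\<^sup>2)\<close> below the rate \<open>P + \<alpha>\<^sup>2 (1 + L\<^sup>2)\<close>, hence below \<open>q\<close>; this is what
  gives the constant \<open>\<alpha>\<^sup>2 \<nu>\<^sup>2 / (\<rho> / q - 1)\<close> rather than \<open>\<alpha>\<^sup>2 \<nu>\<^sup>2 / (1 - q / \<rho>)\<close> when \<open>q < \<rho>\<close>.\<close>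

lemma gradient_step_error_bound:
  fixes e D w :: "'a::real_inner" and \<alpha> \<eta> L :: real
  defines "P \<equiv> 1 - 2 * \<alpha> * \<eta> + \<alpha>\<^sup>2 * L\<^sup>2"
  assumes \<alpha>: "0 < \<alpha>" and P: "0 < P"
    and lip: "norm D \<le> L * norm e" and mono: "\<eta> * (norm e)\<^sup>2 \<le> D \<bullet> e"
  shows "(norm (e - \<alpha> *\<^sub>R (D + w)))\<^sup>2
    \<le> (P + \<alpha>\<^sup>2 * (1 + L\<^sup>2)) * (norm e)\<^sup>2 + (\<alpha>\<^sup>2 + P / (1 + L\<^sup>2)) * (norm w)\<^sup>2"
proof -
  have "(norm D)\<^sup>2 \<le> (L * norm e)\<^sup>2" using lip by (simp add: power_mono)
  have "(norm (e - \<alpha> *\<^sub>R D))\<^sup>2 = (norm e)\<^sup>2 - 2 * \<alpha> * (D \<bullet> e) + \<alpha>\<^sup>2 * (norm D)\<^sup>2"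
    unfolding power2_norm_diff by (simp add: inner_commute power_mult_distrib)
  also have "\<dots> \<le> (norm e)\<^sup>2 - 2 * \<alpha> * (\<eta> * (norm e)\<^sup>2) + \<alpha>\<^sup>2 * (L * norm e)\<^sup>2"
    using \<alpha> mono \<open>(norm D)\<^sup>2 \<le> (L * norm e)\<^sup>2\<close> by (intro add_mono diff_mono mult_left_mono) auto
  also have "\<dots> = P * (norm e)\<^sup>2" by (simp add: P_def power_mult_distrib algebra_simps)
  finally have exact: "(norm (e - \<alpha> *\<^sub>R D))\<^sup>2 \<le> P * (norm e)\<^sup>2" .
  define t where "t = \<alpha>\<^sup>2 * (1 + L\<^sup>2) / P"
  have t: "0 < t" using \<alpha> P by (simp add: t_def add_pos_nonneg)
  have "(norm (e - \<alpha> *\<^sub>R (D + w)))\<^sup>2 = (norm ((e - \<alpha> *\<^sub>R D) + (- \<alpha> *\<^sub>R w)))\<^sup>2"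
    by (simp add: algebra_simps)
  also have "\<dots> \<le> (1 + t) * (norm (e - \<alpha> *\<^sub>R D))\<^sup>2 + (1 + 1 / t) * (norm (- \<alpha> *\<^sub>R w))\<^sup>2"
    by (rule power2_norm_add_le_weighted[OF t])
  also have "\<dots> \<le> (1 + t) * (P * (norm e)\<^sup>2) + (1 + 1 / t) * \<alpha>\<^sup>2 * (norm w)\<^sup>2"
    using exact t by (simp add: power_mult_distrib)
  also have "\<dots> = (P + t * P) * (norm e)\<^sup>2 + (\<alpha>\<^sup>2 + \<alpha>\<^sup>2 / t) * (norm w)\<^sup>2"
    by (simp add: algebra_simps)
  also have "t * P = \<alpha>\<^sup>2 * (1 + L\<^sup>2)" using P by (simp add: t_def)
  also have "\<alpha>\<^sup>2 / t = P / (1 + L\<^sup>2)" using \<alpha> by (simp add: t_def)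
  finally show ?thesis .
qed

lemma nonexpansive_gradient_step_bound:
  fixes T G :: "'a::real_inner \<Rightarrow> 'a" and \<alpha> \<eta> L :: real
  defines "P \<equiv> 1 - 2 * \<alpha> * \<eta> + \<alpha>\<^sup>2 * L\<^sup>2"
  assumes T: "1-lipschitz_on UNIV T" and fixed: "T (xs - \<alpha> *\<^sub>R G xs) = xs"
    and lip: "norm (G y - G xs) \<le> L * norm (y - xs)"
    and mono: "\<eta> * (norm (y - xs))\<^sup>2 \<le> (G y - G xs) \<bullet> (y - xs)"
    and \<alpha>: "0 < \<alpha>" and P: "0 < P"
  shows "(norm (T (y - \<alpha> *\<^sub>R g) - xs))\<^sup>2
    \<le> (P + \<alpha>\<^sup>2 * (1 + L\<^sup>2)) * (norm (y - xs))\<^sup>2 + (\<alpha>\<^sup>2 + P / (1 + L\<^sup>2)) * (norm (g - G y))\<^sup>2"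
proof -
  have "norm (T (y - \<alpha> *\<^sub>R g) - xs) \<le> norm ((y - \<alpha> *\<^sub>R g) - (xs - \<alpha> *\<^sub>R G xs))"
    using lipschitz_onD[OF T, of "y - \<alpha> *\<^sub>R g" "xs - \<alpha> *\<^sub>R G xs"] fixed by (simp add: dist_norm)
  then have "(norm (T (y - \<alpha> *\<^sub>R g) - xs))\<^sup>2 \<le> (norm ((y - \<alpha> *\<^sub>R g) - (xs - \<alpha> *\<^sub>R G xs)))\<^sup>2"
    by (simp add: power_mono)
  also have "(y - \<alpha> *\<^sub>R g) - (xs - \<alpha> *\<^sub>R G xs) = (y - xs) - \<alpha> *\<^sub>R ((G y - G xs) + (g - G y))"
    by (simp add: algebra_simps)
  also have "(norm \<dots>)\<^sup>2
      \<le> (P + \<alpha>\<^sup>2 * (1 + L\<^sup>2)) * (norm (y - xs))\<^sup>2 + (\<alpha>\<^sup>2 + P / (1 + L\<^sup>2)) * (norm (g - G y))\<^sup>2"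
    unfolding P_def by (rule gradient_step_error_bound[OF \<alpha> P[unfolded P_def] lip mono])
  finally show ?thesis .
qed

lemma gradient_step_factor_bounds:
  fixes \<alpha> \<eta> L :: real
  assumes \<alpha>: "0 < \<alpha>" and \<eta>: "0 < \<eta>" "\<eta> \<le> L" and small: "\<alpha> * (1 + 2 * L\<^sup>2) < 2 * \<eta>"
  shows "0 < 1 - 2 * \<alpha> * \<eta> + \<alpha>\<^sup>2 * L\<^sup>2" "1 - 2 * \<alpha> * \<eta> + \<alpha>\<^sup>2 * L\<^sup>2 \<le> 1"
proof -
  have \<eta>L: "\<eta>\<^sup>2 \<le> L\<^sup>2" using \<eta> by (intro power_mono) auto
  have "\<alpha> * \<eta> < 1"
  proof (rule ccontr)
    assume "\<not> \<alpha> * \<eta> < 1"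
    then have "2 * \<eta> \<le> 2 * \<eta> * (\<alpha> * \<eta>)" using \<eta> by simp
    also have "\<dots> \<le> \<alpha> * (2 * L\<^sup>2)" using \<eta>L \<alpha> by (simp add: power2_eq_square algebra_simps)
    finally show False using small \<alpha> by (simp add: algebra_simps)
  qed
  moreover have "1 - 2 * \<alpha> * \<eta> + \<alpha>\<^sup>2 * L\<^sup>2 = (1 - \<alpha> * \<eta>)\<^sup>2 + \<alpha>\<^sup>2 * (L\<^sup>2 - \<eta>\<^sup>2)"
    by (simp add: power2_diff power_mult_distrib algebra_simps)
  ultimately show "0 < 1 - 2 * \<alpha> * \<eta> + \<alpha>\<^sup>2 * L\<^sup>2" using \<eta>L by (simp add: add_pos_nonneg)
  have "\<alpha> * L\<^sup>2 \<le> \<alpha> * (1 + 2 * L\<^sup>2)" using \<alpha> by (intro mult_left_mono) auto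
  then have "\<alpha> * L\<^sup>2 \<le> 2 * \<eta>" using small by linarith
  then have "\<alpha> * (\<alpha> * L\<^sup>2) \<le> \<alpha> * (2 * \<eta>)" using \<alpha> by (intro mult_left_mono) auto
  then show "1 - 2 * \<alpha> * \<eta> + \<alpha>\<^sup>2 * L\<^sup>2 \<le> 1" by (simp add: power2_eq_square algebra_simps)
qed

lemma step_size_constants:
  fixes \<alpha> \<eta> L \<nu>1 Lt q P q0 cw :: real
  defines "Lt \<equiv> sqrt (1 + 2 * (1 + 2 * \<alpha>\<^sup>2) * \<nu>1\<^sup>2 + 2 * L\<^sup>2)"
    and "q \<equiv> 1 - 2 * \<alpha> * \<eta> + \<alpha>\<^sup>2 * Lt\<^sup>2"
    and "P \<equiv> 1 - 2 * \<alpha> * \<eta> + \<alpha>\<^sup>2 * L\<^sup>2"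
    and "q0 \<equiv> P + \<alpha>\<^sup>2 * (1 + L\<^sup>2)" and "cw \<equiv> \<alpha>\<^sup>2 + P / (1 + L\<^sup>2)"
  assumes \<alpha>: "0 < \<alpha>" "\<alpha> < 2 * \<eta> / Lt\<^sup>2" and \<eta>: "0 < \<eta>" "\<eta> \<le> L"
  shows "0 < P" "0 < q" "q < 1" "0 \<le> cw" "cw \<le> 1 + 2 * \<alpha>\<^sup>2" "cw \<le> q * (1 + 2 * \<alpha>\<^sup>2)"
    "q0 + cw * (2 * \<nu>1\<^sup>2 * \<alpha>\<^sup>2) \<le> q"
proof -
  define \<nu> where "\<nu> = (1 + 2 * \<alpha>\<^sup>2) * \<nu>1\<^sup>2"
  have \<nu>: "0 \<le> \<nu>" by (simp add: \<nu>_def)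
  have Lt2: "Lt\<^sup>2 = 1 + 2 * \<nu> + 2 * L\<^sup>2" unfolding Lt_def \<nu>_def by (simp add: algebra_simps)
  have q: "q = q0 + 2 * \<alpha>\<^sup>2 * \<nu>" by (simp add: q_def q0_def P_def Lt2 algebra_simps)
  have step: "\<alpha> * (1 + 2 * \<nu> + 2 * L\<^sup>2) < 2 * \<eta>"
    using \<alpha> \<nu> Lt2 by (simp add: pos_less_divide_eq add_pos_nonneg)
  have "\<alpha> * (1 + 2 * L\<^sup>2) \<le> \<alpha> * (1 + 2 * \<nu> + 2 * L\<^sup>2)" using \<alpha> \<nu> by (intro mult_left_mono) auto
  then have "\<alpha> * (1 + 2 * L\<^sup>2) < 2 * \<eta>" using step by linarith
  note P = gradient_step_factor_bounds[OF \<alpha>(1) \<eta> this, folded P_def]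
  then show "0 < P" "0 \<le> cw" by (simp_all add: cw_def)
  have "P / (1 + L\<^sup>2) \<le> P" using P by (simp add: divide_le_eq add_pos_nonneg)
  then show cw: "cw \<le> 1 + 2 * \<alpha>\<^sup>2"
    using P zero_le_power2[of \<alpha>] unfolding cw_def by linarith
  have "\<alpha> * (\<alpha> * (1 + 2 * \<nu> + 2 * L\<^sup>2)) < \<alpha> * (2 * \<eta>)" using step \<alpha> by simp
  then show "q < 1" unfolding q_def Lt2 by (simp add: power2_eq_square algebra_simps)
  have "\<alpha>\<^sup>2 * (1 + L\<^sup>2) = \<alpha>\<^sup>2 + \<alpha>\<^sup>2 * L\<^sup>2" "0 \<le> \<alpha>\<^sup>2 * L\<^sup>2" by (simp_all add: algebra_simps)
  then have "cw \<le> q0" using \<open>P / (1 + L\<^sup>2) \<le> P\<close> unfolding cw_def q0_def by linarith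
  moreover have "q0 \<le> q" using \<nu> by (simp add: q)
  moreover have "0 < q0" using P by (simp add: q0_def add_pos_nonneg)
  ultimately have "cw \<le> q" "0 < q" by simp_all
  moreover have "q * 1 \<le> q * (1 + 2 * \<alpha>\<^sup>2)" using \<open>0 < q\<close> by (intro mult_left_mono) auto
  ultimately show "0 < q" "cw \<le> q * (1 + 2 * \<alpha>\<^sup>2)" by linarith+
  have "cw * (2 * \<nu>1\<^sup>2 * \<alpha>\<^sup>2) \<le> (1 + 2 * \<alpha>\<^sup>2) * (2 * \<nu>1\<^sup>2 * \<alpha>\<^sup>2)"
    using cw by (intro mult_right_mono) auto
  then show "q0 + cw * (2 * \<nu>1\<^sup>2 * \<alpha>\<^sup>2) \<le> q" by (simp add: q \<nu>_def algebra_simps)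
qed

section \<open>Linear recursions\<close>

primrec lin_rec :: "real \<Rightarrow> real \<Rightarrow> real \<Rightarrow> real \<Rightarrow> nat \<Rightarrow> real" where
  "lin_rec C q g \<rho> 0 = C"
| "lin_rec C q g \<rho> (Suc k) = q * lin_rec C q g \<rho> k + g * \<rho> ^ Suc k"

lemma lin_rec_nonneg: "0 \<le> C \<Longrightarrow> 0 \<le> q \<Longrightarrow> 0 \<le> g \<Longrightarrow> 0 \<le> \<rho> \<Longrightarrow> 0 \<le> lin_rec C q g \<rho> k"
  by (induction k) simp_all

lemma ennreal_le_lin_rec:
  assumes a0: "a 0 \<le> ennreal C"
    and step: "\<And>k. a (Suc k) \<le> ennreal (c k) * a k + ennreal (d k)"
    and c: "\<And>k. 0 \<le> c k" "\<And>k. c k \<le> q" and d: "\<And>k. d k \<le> g * \<rho> ^ Suc k"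
    and nonneg: "0 \<le> C" "0 \<le> g" "0 \<le> \<rho>"
  shows "a k \<le> ennreal (lin_rec C q g \<rho> k)"
proof (induction k)
  case (Suc k)
  have q: "0 \<le> q" using c order_trans by blast
  have "a (Suc k) \<le> ennreal (c k) * ennreal (lin_rec C q g \<rho> k) + ennreal (d k)"
    using step[of k] Suc by (meson add_right_mono mult_left_mono order_trans zero_le)
  also have "\<dots> \<le> ennreal (q * lin_rec C q g \<rho> k) + ennreal (g * \<rho> ^ Suc k)"
  proof (intro add_mono ennreal_leI d)
    have L: "0 \<le> lin_rec C q g \<rho> k" by (rule lin_rec_nonneg[OF nonneg(1) q nonneg(2,3)])
    then have "ennreal (c k) * ennreal (lin_rec C q g \<rho> k) = ennreal (c k * lin_rec C q g \<rho> k)"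
      using c(1) by (simp add: ennreal_mult)
    also have "\<dots> \<le> ennreal (q * lin_rec C q g \<rho> k)" by (rule ennreal_leI[OF mult_right_mono[OF c(2) L]])
    finally show "ennreal (c k) * ennreal (lin_rec C q g \<rho> k) \<le> ennreal (q * lin_rec C q g \<rho> k)" .
  qed
  also have "\<dots> = ennreal (lin_rec C q g \<rho> (Suc k))"
    using lin_rec_nonneg[OF nonneg(1) q nonneg(2,3)] q nonneg by (simp add: ennreal_plus)
  finally show ?case .
qed (simp add: a0)

lemma lin_rec_closed_form:
  assumes "\<rho> \<noteq> q"
  shows "lin_rec C q g \<rho> k = C * q ^ k + g * \<rho> * (\<rho> ^ k - q ^ k) / (\<rho> - q)"
proof (induction k)
  case (Suc k)
  have "g * \<rho> * (\<rho> ^ Suc k - q ^ Suc k) = q * (g * \<rho> * (\<rho> ^ k - q ^ k)) + g * \<rho> ^ Suc k * (\<rho> - q)"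
    by (simp add: algebra_simps)
  then have "g * \<rho> * (\<rho> ^ Suc k - q ^ Suc k) / (\<rho> - q)
      = q * (g * \<rho> * (\<rho> ^ k - q ^ k) / (\<rho> - q)) + g * \<rho> ^ Suc k"
    using assms by (simp add: field_simps)
  then show ?case using Suc by (simp add: algebra_simps)
qed simp

lemma lin_rec_diagonal: "lin_rec C q g q k = C * q ^ k + g * real k * q ^ k"
  by (induction k) (simp_all add: algebra_simps)

lemma lin_rec_le:
  assumes \<rho>: "0 < \<rho>" and q: "0 < q" and ne: "\<rho> \<noteq> q" and C: "0 \<le> C" and g: "0 \<le> g"
  shows "lin_rec C q g \<rho> k \<le> (C + g * \<rho> / \<bar>\<rho> - q\<bar>) * max \<rho> q ^ k"
proof -
  have pows: "\<rho> ^ k \<le> max \<rho> q ^ k" "q ^ k \<le> max \<rho> q ^ k" "0 \<le> \<rho> ^ k" "0 \<le> q ^ k"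
    using \<rho> q by (simp_all add: power_mono)
  have "0 \<le> (\<rho> ^ k - q ^ k) / (\<rho> - q)"
    using \<rho> q ne by (cases "\<rho> < q") (auto simp: zero_le_divide_iff power_mono)
  then have "(\<rho> ^ k - q ^ k) / (\<rho> - q) = \<bar>\<rho> ^ k - q ^ k\<bar> / \<bar>\<rho> - q\<bar>"
    by (metis abs_divide abs_of_nonneg)
  also have "\<dots> \<le> max \<rho> q ^ k / \<bar>\<rho> - q\<bar>"
  proof (rule divide_right_mono)
    show "\<bar>\<rho> ^ k - q ^ k\<bar> \<le> max \<rho> q ^ k" unfolding abs_le_iff using pows by linarith
  qed simp
  finally have "g * \<rho> * ((\<rho> ^ k - q ^ k) / (\<rho> - q)) \<le> g * \<rho> * (max \<rho> q ^ k / \<bar>\<rho> - q\<bar>)"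
    using g \<rho> by (intro mult_left_mono) auto
  moreover have "C * q ^ k \<le> C * max \<rho> q ^ k" using pows C by (intro mult_left_mono)
  ultimately show ?thesis
    using lin_rec_closed_form[OF ne] by (simp add: algebra_simps)
qed

lemma lin_rec_le_max:
  assumes \<rho>: "0 < \<rho>" "\<rho> \<le> 1" and q: "0 < q" and ne: "\<rho> \<noteq> q" and C: "0 \<le> C"
    and g: "0 \<le> g" "g \<le> V" "g \<le> V * q"
  shows "lin_rec C q g \<rho> k \<le> (C + V / (max (\<rho> / q) (q / \<rho>) - 1)) * max \<rho> q ^ k"
proof -
  have "g * \<rho> / \<bar>\<rho> - q\<bar> \<le> V / (max (\<rho> / q) (q / \<rho>) - 1)"
  proof (cases "q < \<rho>")
    case True
    then have "q / \<rho> < 1" "1 < \<rho> / q" using q by simp_all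
    then have "max (\<rho> / q) (q / \<rho>) = \<rho> / q" by simp
    then have "max (\<rho> / q) (q / \<rho>) - 1 = (\<rho> - q) / q" using q by (simp add: field_simps)
    moreover have "g * \<rho> \<le> V * q" using g \<rho> by (metis mult_left_le order_trans less_imp_le)
    ultimately show ?thesis using True q by (simp add: divide_right_mono)
  next
    case False
    then have lt: "\<rho> < q" using ne by simp
    then have "\<rho> / q < 1" "1 < q / \<rho>" using \<rho> q by simp_all
    then have "max (\<rho> / q) (q / \<rho>) = q / \<rho>" by simp
    then have "max (\<rho> / q) (q / \<rho>) - 1 = (q - \<rho>) / \<rho>" using \<rho> by (simp add: field_simps)
    moreover have "g * \<rho> \<le> V * \<rho>" using g \<rho> by (intro mult_right_mono) auto
    ultimately show ?thesis using lt \<rho> by (simp add: divide_right_mono)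
  qed
  then have "(C + g * \<rho> / \<bar>\<rho> - q\<bar>) * max \<rho> q ^ k \<le> (C + V / (max (\<rho> / q) (q / \<rho>) - 1)) * max \<rho> q ^ k"
    using \<rho> q by (intro mult_right_mono) auto
  with lin_rec_le[OF \<rho>(1) q ne C g(1), of k] show ?thesis by linarith
qed

lemma real_mult_exp_neg_le:
  fixes s :: real assumes s: "0 < s"
  shows "real k * exp (- (real k * s)) \<le> 1 / (exp 1 * s)"
proof -
  have "1 + (real k * s - 1) \<le> exp (real k * s - 1)" by (rule exp_ge_add_one_self)
  then have "real k * s * exp 1 \<le> exp (real k * s)" by (simp add: exp_diff field_simps)
  then have "real k * s * exp 1 * exp (- (real k * s)) \<le> 1"
    by (simp add: exp_minus field_simps)
  then show ?thesis using s by (simp add: field_simps)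
qed

lemma lin_rec_diagonal_le:
  assumes q: "0 < q" "q < qt" and g: "0 \<le> g" "g \<le> V" and C: "0 \<le> C"
  shows "lin_rec C q g q k \<le> (C + V / (exp 1 * ln (qt / q))) * qt ^ k"
proof -
  define s where "s = ln (qt / q)"
  have s: "0 < s" and qt: "0 < qt" using q by (simp_all add: s_def)
  have "(q / qt) ^ k = exp (ln ((q / qt) ^ k))" using q qt by simp
  also have "\<dots> = exp (- (real k * s))" using q qt by (simp add: s_def ln_realpow ln_div algebra_simps)
  finally have "(q / qt) ^ k = exp (- (real k * s))" .
  then have qk: "q ^ k = qt ^ k * exp (- (real k * s))" using qt by (simp add: power_divide field_simps)
  have "real k * q ^ k \<le> qt ^ k / (exp 1 * s)"
    using mult_left_mono[OF real_mult_exp_neg_le[OF s, of k], of "qt ^ k"] qt qk by (simp add: algebra_simps)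
  then have "g * (real k * q ^ k) \<le> V * (qt ^ k / (exp 1 * s))"
    using g q by (intro mult_mono) auto
  moreover have "C * q ^ k \<le> C * qt ^ k" using C q by (intro mult_left_mono power_mono) auto
  ultimately show ?thesis
    by (simp add: lin_rec_diagonal s_def field_simps)
qed

lemma ennreal_le_lin_rec_rates:
  assumes bound: "\<And>k. a k \<le> ennreal (lin_rec C q g \<rho> k)"
    and \<rho>: "0 < \<rho>" "\<rho> \<le> 1" and q: "0 < q" and C: "0 \<le> C"
    and g: "0 \<le> g" "g \<le> V" "g \<le> V * q"
  shows "(\<rho> \<noteq> q \<longrightarrow> (\<forall>k. a k \<le> ennreal ((C + V / (max (\<rho> / q) (q / \<rho>) - 1)) * max \<rho> q ^ k)))
    \<and> (\<rho> = q \<longrightarrow> (\<forall>qt k. q < qt \<longrightarrow> a k \<le> ennreal ((C + V / (exp 1 * ln (qt / q))) * qt ^ k)))"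
proof (intro conjI impI allI)
  fix k assume "\<rho> \<noteq> q"
  from lin_rec_le_max[OF \<rho> q this C g]
  have "ennreal (lin_rec C q g \<rho> k) \<le> ennreal ((C + V / (max (\<rho> / q) (q / \<rho>) - 1)) * max \<rho> q ^ k)"
    by (rule ennreal_leI)
  with bound[of k] show "a k \<le> ennreal ((C + V / (max (\<rho> / q) (q / \<rho>) - 1)) * max \<rho> q ^ k)"
    by (rule order_trans)
next
  fix qt k assume "\<rho> = q" "q < qt"
  with lin_rec_diagonal_le[OF q _ g(1,2) C, of qt k]
  have "ennreal (lin_rec C q g \<rho> k) \<le> ennreal ((C + V / (exp 1 * ln (qt / q))) * qt ^ k)"
    by (intro ennreal_leI) simp
  with bound[of k] show "a k \<le> ennreal ((C + V / (exp 1 * ln (qt / q))) * qt ^ k)"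
    by (rule order_trans)
qed

section \<open>The expected error\<close>

lemma borel_measurable_continuous_on_comp:
  assumes "continuous_on S g" "X \<in> borel_measurable M" "\<forall>\<omega>\<in>space M. X \<omega> \<in> S"
  shows "(\<lambda>\<omega>. g (X \<omega>)) \<in> borel_measurable M"
proof (rule borel_measurableI)
  fix B :: "'b set" assume "open B"
  then obtain A where A: "open A" "A \<inter> S = g -` B \<inter> S"
    using assms(1) unfolding continuous_on_open_invariant by blast
  have "(\<lambda>\<omega>. g (X \<omega>)) -` B \<inter> space M = X -` A \<inter> space M"
    using A(2) assms(3) by blast
  moreover have "X -` A \<inter> space M \<in> sets M"
    using assms(2) A(1) by (intro measurable_sets) auto
  ultimately show "(\<lambda>\<omega>. g (X \<omega>)) -` B \<inter> space M \<in> sets M" by simp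
qed

lemma borel_measurable_iterates:
  fixes x g :: "nat \<Rightarrow> 'w \<Rightarrow> 'a::euclidean_space"
  assumes x0: "x 0 \<in> borel_measurable M" and T: "continuous_on UNIV T"
    and g: "\<And>k. g k \<in> borel_measurable M"
    and step: "\<And>k \<omega>. \<omega> \<in> space M \<Longrightarrow> x (Suc k) \<omega> = T (x k \<omega> - c *\<^sub>R g k \<omega>)"
  shows "x k \<in> borel_measurable M"
proof (induction k)
  case (Suc k)
  have "(\<lambda>\<omega>. T (x k \<omega> - c *\<^sub>R g k \<omega>)) \<in> borel_measurable M"
    using Suc g
    by (intro borel_measurable_continuous_on[OF T] borel_measurable_diff borel_measurable_scaleR) auto
  then show ?case using step by (simp cong: measurable_cong)
qed (rule x0)

lemma subalgebra_natfilt: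
  assumes "\<And>j. j \<le> k \<Longrightarrow> x j \<in> borel_measurable M"
  shows "subalgebra M (natfilt M x k)"
proof -
  define G where "G = (\<Union>j\<in>{..k}. {x j -` A \<inter> space M | A. A \<in> sets borel})"
  have GP: "G \<subseteq> Pow (space M)" by (auto simp: G_def)
  have "G \<subseteq> sets M" using assms by (auto simp: G_def intro!: measurable_sets)
  then have "sigma_sets (space M) G \<subseteq> sets M" by (rule sets.sigma_sets_subset)
  moreover have "space (natfilt M x k) = space M" "sets (natfilt M x k) = sigma_sets (space M) G"
    unfolding natfilt_def G_def[symmetric] using GP by (simp_all add: space_measure_of sets_measure_of)
  ultimately show ?thesis by (simp add: subalgebra_def)
qed

lemma power2_norm_add_le:
  fixes a b :: "'a::real_normed_vector"
  shows "(norm (a + b))\<^sup>2 \<le> 2 * (norm a)\<^sup>2 + 2 * (norm b)\<^sup>2"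
proof -
  have "(norm (a + b))\<^sup>2 \<le> (norm a + norm b)\<^sup>2" by (simp add: norm_triangle_ineq power_mono)
  also have "\<dots> \<le> 2 * (norm a)\<^sup>2 + 2 * (norm b)\<^sup>2"
    using sum_squares_bound[of "norm a" "norm b"] by (simp add: power2_sum algebra_simps)
  finally show ?thesis .
qed

lemma nn_integral_le_nn_cond_exp_bound:
  assumes M: "prob_space M" and F: "subalgebra M F" and f: "f \<in> borel_measurable M"
    and bound: "AE \<omega> in M. nn_cond_exp M F f \<omega> \<le> g \<omega>"
  shows "(\<integral>\<^sup>+\<omega>. f \<omega> \<partial>M) \<le> (\<integral>\<^sup>+\<omega>. g \<omega> \<partial>M)"
proof -
  interpret prob_space M by (rule M)
  interpret F: finite_measure_subalgebra M F by unfold_locales (rule F)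
  have "(\<integral>\<^sup>+\<omega>. f \<omega> \<partial>M) = (\<integral>\<^sup>+\<omega>. nn_cond_exp M F f \<omega> \<partial>M)"
    using F.nn_cond_exp_intg[of "\<lambda>_. 1" f] f by simp
  also have "\<dots> \<le> (\<integral>\<^sup>+\<omega>. g \<omega> \<partial>M)" by (rule nn_integral_mono_AE[OF bound])
  finally show ?thesis .
qed

lemma nn_integral_noisy_step_le:
  fixes X Y Z :: "'w \<Rightarrow> 'a::euclidean_space"
  assumes M: "prob_space M" and F: "subalgebra M F"
    and X: "X \<in> borel_measurable M" and Z: "Z \<in> borel_measurable M"
    and step: "\<And>\<omega>. \<omega> \<in> space M \<Longrightarrow>
      (norm (Y \<omega> - xs))\<^sup>2 \<le> a * (norm (X \<omega> - xs))\<^sup>2 + b * (norm (Z \<omega>))\<^sup>2"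
    and noise: "AE \<omega> in M. nn_cond_exp M F (\<lambda>\<omega>. ennreal ((norm (Z \<omega>))\<^sup>2)) \<omega>
      \<le> ennreal ((\<nu>1\<^sup>2 * (norm (X \<omega>))\<^sup>2 + \<nu>2\<^sup>2) / n)"
    and a: "0 \<le> a" and b: "0 \<le> b" and n: "0 < n"
  shows "(\<integral>\<^sup>+\<omega>. ennreal ((norm (Y \<omega> - xs))\<^sup>2) \<partial>M)
    \<le> ennreal (a + b * (2 * \<nu>1\<^sup>2 / n)) * (\<integral>\<^sup>+\<omega>. ennreal ((norm (X \<omega> - xs))\<^sup>2) \<partial>M)
      + ennreal (b * ((2 * \<nu>1\<^sup>2 * (norm xs)\<^sup>2 + \<nu>2\<^sup>2) / n))"
proof -
  interpret prob_space M by (rule M)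
  define E where "E \<omega> = (norm (X \<omega> - xs))\<^sup>2" for \<omega>
  define W where "W \<omega> = (norm (Z \<omega>))\<^sup>2" for \<omega>
  define s where "s = 2 * \<nu>1\<^sup>2 / n"
  define c where "c = (2 * \<nu>1\<^sup>2 * (norm xs)\<^sup>2 + \<nu>2\<^sup>2) / n"
  have s: "0 \<le> s" and c: "0 \<le> c" using n by (simp_all add: s_def c_def)
  have [measurable]: "X \<in> borel_measurable M" "Z \<in> borel_measurable M" by (fact X Z)+
  have bound: "(\<nu>1\<^sup>2 * (norm (X \<omega>))\<^sup>2 + \<nu>2\<^sup>2) / n \<le> s * E \<omega> + c" for \<omega>
  proof -
    have "\<nu>1\<^sup>2 * (norm (X \<omega>))\<^sup>2 \<le> \<nu>1\<^sup>2 * (2 * E \<omega> + 2 * (norm xs)\<^sup>2)"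
      using power2_norm_add_le[of "X \<omega> - xs" xs] by (intro mult_left_mono) (auto simp: E_def)
    then have "(\<nu>1\<^sup>2 * (norm (X \<omega>))\<^sup>2 + \<nu>2\<^sup>2) / n \<le> (\<nu>1\<^sup>2 * (2 * E \<omega> + 2 * (norm xs)\<^sup>2) + \<nu>2\<^sup>2) / n"
      using n by (intro divide_right_mono) auto
    also have "\<dots> = s * E \<omega> + c" by (simp add: s_def c_def add_divide_distrib algebra_simps)
    finally show ?thesis .
  qed
  have "(\<lambda>\<omega>. ennreal (W \<omega>)) \<in> borel_measurable M" unfolding W_def by measurable
  moreover from noise have "AE \<omega> in M. nn_cond_exp M F (\<lambda>\<omega>. ennreal (W \<omega>)) \<omega> \<le> ennreal (s * E \<omega> + c)"
  proof eventually_elim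
    case (elim \<omega>)
    then show ?case unfolding W_def using ennreal_leI[OF bound[of \<omega>]] by (rule order_trans)
  qed
  ultimately have "(\<integral>\<^sup>+\<omega>. ennreal (W \<omega>) \<partial>M) \<le> (\<integral>\<^sup>+\<omega>. ennreal (s * E \<omega> + c) \<partial>M)"
    by (rule nn_integral_le_nn_cond_exp_bound[OF M F])
  also have "\<dots> = ennreal s * (\<integral>\<^sup>+\<omega>. ennreal (E \<omega>) \<partial>M) + ennreal c"
    using s c by (simp add: E_def ennreal_plus ennreal_mult nn_integral_add nn_integral_cmult
        emeasure_space_1)
  finally have noise_int: "(\<integral>\<^sup>+\<omega>. ennreal (W \<omega>) \<partial>M) \<le> ennreal s * (\<integral>\<^sup>+\<omega>. ennreal (E \<omega>) \<partial>M) + ennreal c" .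
  have "(\<integral>\<^sup>+\<omega>. ennreal ((norm (Y \<omega> - xs))\<^sup>2) \<partial>M) \<le> (\<integral>\<^sup>+\<omega>. ennreal (a * E \<omega> + b * W \<omega>) \<partial>M)"
    using step by (intro nn_integral_mono ennreal_leI) (simp add: E_def W_def)
  also have "\<dots> = ennreal a * (\<integral>\<^sup>+\<omega>. ennreal (E \<omega>) \<partial>M) + ennreal b * (\<integral>\<^sup>+\<omega>. ennreal (W \<omega>) \<partial>M)"
    using a b by (simp add: E_def W_def ennreal_plus ennreal_mult nn_integral_add nn_integral_cmult)
  also have "\<dots> \<le> ennreal a * (\<integral>\<^sup>+\<omega>. ennreal (E \<omega>) \<partial>M)
      + ennreal b * (ennreal s * (\<integral>\<^sup>+\<omega>. ennreal (E \<omega>) \<partial>M) + ennreal c)"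
    using noise_int by (intro add_left_mono mult_left_mono) auto
  also have "\<dots> = ennreal (a + b * s) * (\<integral>\<^sup>+\<omega>. ennreal (E \<omega>) \<partial>M) + ennreal (b * c)"
    using a b s c by (simp add: ennreal_plus ennreal_mult distrib_left distrib_right mult.assoc add.assoc)
  finally show ?thesis by (simp add: E_def s_def c_def)
qed

lemma batch_size_bounds:
  fixes \<alpha> \<rho> :: real and k :: nat
  assumes "0 < \<alpha>" "0 < \<rho>"
  defines "n \<equiv> real (nat \<lceil>(1 / \<alpha>\<^sup>2) * (1 / \<rho> ^ (k + 1))\<rceil>)"
  shows "0 < n" "1 / n \<le> \<alpha>\<^sup>2 * \<rho> ^ Suc k"
proof -
  have pos: "0 < (1 / \<alpha>\<^sup>2) * (1 / \<rho> ^ (k + 1))" using assms by simp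
  moreover have le: "(1 / \<alpha>\<^sup>2) * (1 / \<rho> ^ (k + 1)) \<le> n"
    unfolding n_def by (rule real_nat_ceiling_ge)
  ultimately show n: "0 < n" by linarith
  have "1 / n \<le> 1 / ((1 / \<alpha>\<^sup>2) * (1 / \<rho> ^ (k + 1)))"
    using n pos by (intro divide_left_mono[OF le]) simp_all
  then show "1 / n \<le> \<alpha>\<^sup>2 * \<rho> ^ Suc k" by simp
qed

lemma nn_integral_error_le_lin_rec:
  fixes X Z :: "nat \<Rightarrow> 'w \<Rightarrow> 'a::euclidean_space" and n :: "nat \<Rightarrow> real"
  assumes M: "prob_space M" and F: "\<And>k. subalgebra M (F k)"
    and X: "\<And>k. X k \<in> borel_measurable M" and Z: "\<And>k. Z k \<in> borel_measurable M"
    and step: "\<And>k \<omega>. \<omega> \<in> space M \<Longrightarrow>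
      (norm (X (Suc k) \<omega> - xs))\<^sup>2 \<le> a * (norm (X k \<omega> - xs))\<^sup>2 + b * (norm (Z k \<omega>))\<^sup>2"
    and noise: "\<And>k. AE \<omega> in M. nn_cond_exp M (F k) (\<lambda>\<omega>. ennreal ((norm (Z k \<omega>))\<^sup>2)) \<omega>
      \<le> ennreal ((\<nu>1\<^sup>2 * (norm (X k \<omega>))\<^sup>2 + \<nu>2\<^sup>2) / n k)"
    and n: "\<And>k. 0 < n k" "\<And>k. 1 / n k \<le> \<beta> * \<rho> ^ Suc k"
    and init: "(\<integral>\<^sup>+\<omega>. ennreal ((norm (X 0 \<omega> - xs))\<^sup>2) \<partial>M) \<le> ennreal C"
    and a: "0 \<le> a" and b: "0 \<le> b" and C: "0 \<le> C" and \<rho>: "0 < \<rho>" "\<rho> \<le> 1"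
    and rate: "a + b * (2 * \<nu>1\<^sup>2 * \<beta>) \<le> q"
  shows "(\<integral>\<^sup>+\<omega>. ennreal ((norm (X k \<omega> - xs))\<^sup>2) \<partial>M)
    \<le> ennreal (lin_rec C q (b * \<beta> * (2 * \<nu>1\<^sup>2 * (norm xs)\<^sup>2 + \<nu>2\<^sup>2)) \<rho> k)"
proof -
  have "0 < \<beta> * \<rho> ^ Suc 0" using n[of 0] by (meson divide_pos_pos less_le_trans zero_less_one)
  then have \<beta>: "0 < \<beta>" using \<rho> by (simp add: zero_less_mult_iff)
  show ?thesis
  proof (rule ennreal_le_lin_rec[where a = "\<lambda>k. \<integral>\<^sup>+\<omega>. ennreal ((norm (X k \<omega> - xs))\<^sup>2) \<partial>M"
        and c = "\<lambda>k. a + b * (2 * \<nu>1\<^sup>2 / n k)"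
        and d = "\<lambda>k. b * ((2 * \<nu>1\<^sup>2 * (norm xs)\<^sup>2 + \<nu>2\<^sup>2) / n k)", OF init])
    fix k
    show "(\<integral>\<^sup>+\<omega>. ennreal ((norm (X (Suc k) \<omega> - xs))\<^sup>2) \<partial>M)
        \<le> ennreal (a + b * (2 * \<nu>1\<^sup>2 / n k)) * (\<integral>\<^sup>+\<omega>. ennreal ((norm (X k \<omega> - xs))\<^sup>2) \<partial>M)
          + ennreal (b * ((2 * \<nu>1\<^sup>2 * (norm xs)\<^sup>2 + \<nu>2\<^sup>2) / n k))"
      by (rule nn_integral_noisy_step_le[OF M F X Z step noise a b n(1)])
    show "0 \<le> a + b * (2 * \<nu>1\<^sup>2 / n k)" using a b n(1)[of k] by simp
    have "\<rho> ^ Suc k \<le> 1" using \<rho> by (intro power_le_one) auto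
    then have "\<beta> * \<rho> ^ Suc k \<le> \<beta>" using \<beta> by (simp add: mult_left_le)
    then have "1 / n k \<le> \<beta>" using n(2)[of k] by linarith
    then have "b * (2 * \<nu>1\<^sup>2 * (1 / n k)) \<le> b * (2 * \<nu>1\<^sup>2 * \<beta>)"
      using b by (intro mult_left_mono) auto
    then show "a + b * (2 * \<nu>1\<^sup>2 / n k) \<le> q" using rate by simp
    have "0 \<le> b * (2 * \<nu>1\<^sup>2 * (norm xs)\<^sup>2 + \<nu>2\<^sup>2)" using b by simp
    from mult_left_mono[OF n(2)[of k] this]
    show "b * ((2 * \<nu>1\<^sup>2 * (norm xs)\<^sup>2 + \<nu>2\<^sup>2) / n k)
        \<le> b * \<beta> * (2 * \<nu>1\<^sup>2 * (norm xs)\<^sup>2 + \<nu>2\<^sup>2) * \<rho> ^ Suc k"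
      by (simp add: ac_simps)
  qed (use C b \<rho> \<beta> in simp_all)
qed

theorem theorem1:
  fixes M :: "'w measure"
    and blk :: "'n::finite \<Rightarrow> 'p::finite"
    and f :: "'p \<Rightarrow> real^'n \<Rightarrow> real"
    and r :: "'p \<Rightarrow> real^'n \<Rightarrow> ereal"
    and \<psi> :: "'p \<Rightarrow> real^'n \<Rightarrow> 'e \<Rightarrow> real"
    and D :: "'p \<Rightarrow> 'e measure"
    and \<xi> :: "'p \<Rightarrow> nat \<Rightarrow> nat \<Rightarrow> 'w \<Rightarrow> 'e"
    and x :: "nat \<Rightarrow> 'w \<Rightarrow> real^'n"
    and xs :: "real^'n"
    and \<alpha> \<rho> C L \<eta> \<nu>1 \<nu>2 :: real
    and S :: "nat \<Rightarrow> nat"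
    and R :: "(real^'n) set"
    and Lt q \<nu>sq :: real
  defines "R \<equiv> {y. \<forall>j. y \<in> edom (r j)}"
    and "S \<equiv> (\<lambda>k. nat \<lceil>(1 / \<alpha>\<^sup>2) * (1 / \<rho> ^ (k + 1))\<rceil>)"
    and "Lt \<equiv> sqrt (1 + 2 * (1 + 2 * \<alpha>\<^sup>2) * \<nu>1\<^sup>2 + 2 * L\<^sup>2)"
    and "\<nu>sq \<equiv> 2 * (1 + 2 * \<alpha>\<^sup>2) * \<nu>1\<^sup>2 * (norm xs)\<^sup>2 + (1 + 2 * \<alpha>\<^sup>2) * \<nu>2\<^sup>2"
    and "q \<equiv> 1 - 2 * \<alpha> * \<eta> + \<alpha>\<^sup>2 * Lt\<^sup>2"
  assumes M: "prob_space M"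
    \<comment> \<open>Assumption A(i): r_i proper, lsc, convex; r_i depends only on player i's block\<close>
    and r_block: "\<forall>i y. r i y = r i (restr blk i y)"
    and r_proper: "\<forall>i y. r i y \<noteq> - \<infinity>"
    and r_lsc: "\<forall>i. elsc (r i)"
    and r_convex: "\<forall>i. econvex (r i)"
    \<comment> \<open>f_i(x) = E[psi_i(x; xi_i)], xi_i with law D i\<close>
    and D: "\<forall>i. prob_space (D i)"
    and f_exp: "\<forall>i y. f i y = (\<integral>v. \<psi> i y v \<partial>D i)"
    and \<xi>_meas: "\<forall>i k p. \<xi> i k p \<in> measurable M (D i)"
    and \<xi>_law: "\<forall>i k p. distr M (D i) (\<xi> i k p) = D i"
    \<comment> \<open>Assumption A(ii)\<close>
    and A2: "\<forall>i y. (\<forall>j. j \<noteq> i \<longrightarrow> y \<in> edom (r j)) \<longrightarrow>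
       (\<exists>U. open U \<and> edom (r i) \<subseteq> U
          \<and> (\<forall>u\<in>U. (\<lambda>v. f i (embed blk i v y)) differentiable (at u))
          \<and> continuous_on U (gradf (\<lambda>v. f i (embed blk i v y)))
          \<and> convex_on U (\<lambda>v. f i (embed blk i v y)))"
    \<comment> \<open>Assumption A(iii)\<close>
    and A3: "\<forall>i y e. (\<forall>j. j \<noteq> i \<longrightarrow> y \<in> edom (r j)) \<longrightarrow>
       (\<exists>U. open U \<and> edom (r i) \<subseteq> U
          \<and> (\<forall>u\<in>U. (\<lambda>v. \<psi> i (embed blk i v y) e) differentiable (at u)))"
    \<comment> \<open>Assumption B(i), B(ii)\<close>
    and B1: "\<forall>y\<in>R. \<forall>z\<in>R. norm (Gmap blk f y - Gmap blk f z) \<le> L * norm (y - z)"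
    and \<eta>_pos: "0 < \<eta>"
    and B2: "\<forall>y\<in>R. \<forall>z\<in>R. (Gmap blk f y - Gmap blk f z) \<bullet> (y - z) \<ge> \<eta> * (norm (y - z))\<^sup>2"
    and \<eta>_le_L: "\<eta> \<le> L"
    \<comment> \<open>Assumption B(iii)\<close>
    and \<nu>_nonneg: "0 \<le> \<nu>1" "0 \<le> \<nu>2"
    and B3: "\<forall>k. AE \<omega> in M.
       nn_cond_exp M (natfilt M x k)
          (\<lambda>\<omega>. ennreal ((norm (ghat blk \<psi> \<xi> S k (x k \<omega>) \<omega> - Gmap blk f (x k \<omega>)))\<^sup>2)) \<omega>
       \<le> ennreal ((\<nu>1\<^sup>2 * (norm (x k \<omega>))\<^sup>2 + \<nu>2\<^sup>2) / real (S k))"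
    \<comment> \<open>x* is the Nash equilibrium\<close>
    and NE: "is_NE blk f r xs"
    \<comment> \<open>the VS-PGR scheme\<close>
    and x0_dom: "\<forall>\<omega>\<in>space M. x 0 \<omega> \<in> R"
    and x0_meas: "x 0 \<in> borel_measurable M"
    and ghat_meas: "\<forall>k. (\<lambda>\<omega>. ghat blk \<psi> \<xi> S k (x k \<omega>) \<omega>) \<in> borel_measurable M"
    and step: "\<forall>k. \<forall>\<omega>\<in>space M. x (Suc k) \<omega> =
       (\<chi> j. prox blk (blk j) (r (blk j)) \<alpha> (x k \<omega> - \<alpha> *\<^sub>R ghat blk \<psi> \<xi> S k (x k \<omega>) \<omega>) $ j)"
    \<comment> \<open>parameters\<close>
    and \<rho>: "0 < \<rho>" "\<rho> < 1"
    and C: "0 < C"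
    and init: "(\<integral>\<^sup>+\<omega>. ennreal ((norm (x 0 \<omega> - xs))\<^sup>2) \<partial>M) \<le> ennreal C"
    and \<alpha>: "0 < \<alpha>" "\<alpha> < 2 * \<eta> / Lt\<^sup>2"
  shows "q < 1
    \<and> (\<rho> \<noteq> q \<longrightarrow> (\<forall>k. (\<integral>\<^sup>+\<omega>. ennreal ((norm (x k \<omega> - xs))\<^sup>2) \<partial>M)
          \<le> ennreal ((C + \<alpha>\<^sup>2 * \<nu>sq / (max (\<rho> / q) (q / \<rho>) - 1)) * (max \<rho> q) ^ k)))
    \<and> (\<rho> = q \<longrightarrow> (\<forall>qt. q < qt \<and> qt < 1 \<longrightarrow> (\<forall>k. (\<integral>\<^sup>+\<omega>. ennreal ((norm (x k \<omega> - xs))\<^sup>2) \<partial>M)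
          \<le> ennreal ((C + \<alpha>\<^sup>2 * \<nu>sq / (exp 1 * ln (qt / q))) * qt ^ k))))"
proof -
  interpret prob_space M by (rule M)
  define P where "P = 1 - 2 * \<alpha> * \<eta> + \<alpha>\<^sup>2 * L\<^sup>2"
  define q0 where "q0 = P + \<alpha>\<^sup>2 * (1 + L\<^sup>2)"
  define cw where "cw = \<alpha>\<^sup>2 + P / (1 + L\<^sup>2)"
  note constants = step_size_constants[OF \<alpha>[unfolded Lt_def] \<eta>_pos \<eta>_le_L,
      folded Lt_def, folded q_def P_def, folded q0_def cw_def]
  obtain \<omega>0 where "\<omega>0 \<in> space M" using not_empty by blast
  then have "\<forall>i. x 0 \<omega>0 \<in> edom (r i)" using x0_dom by (simp add: R_def)
  from prox_map_at_NE[OF NE r_block r_proper r_lsc r_convex this _ \<alpha>(1)] A2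
  have xsR: "xs \<in> R" and T_dom: "\<And>z. prox_map blk r \<alpha> z \<in> R"
    and T_lip: "1-lipschitz_on UNIV (prox_map blk r \<alpha>)"
    and fixed: "prox_map blk r \<alpha> (xs - \<alpha> *\<^sub>R Gmap blk f xs) = xs"
    unfolding R_def by blast+
  have step_T: "\<And>k \<omega>. \<omega> \<in> space M \<Longrightarrow>
      x (Suc k) \<omega> = prox_map blk r \<alpha> (x k \<omega> - \<alpha> *\<^sub>R ghat blk \<psi> \<xi> S k (x k \<omega>) \<omega>)"
    using step by (simp add: prox_map_def)
  then have xR: "\<forall>\<omega>\<in>space M. x k \<omega> \<in> R" for k
    using x0_dom T_dom by (cases k) auto
  have x_meas: "x k \<in> borel_measurable M" for k
    using borel_measurable_iterates[where x = x and g = "\<lambda>k \<omega>. ghat blk \<psi> \<xi> S k (x k \<omega>) \<omega>",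
        OF x0_meas lipschitz_on_continuous_on[OF T_lip]] ghat_meas step_T by blast
  have "L-lipschitz_on R (Gmap blk f)"
    using B1 \<eta>_pos \<eta>_le_L by (intro lipschitz_onI) (auto simp: dist_norm)
  then have G_meas: "(\<lambda>\<omega>. Gmap blk f (x k \<omega>)) \<in> borel_measurable M" for k
    using borel_measurable_continuous_on_comp[OF lipschitz_on_continuous_on x_meas xR] by blast
  have one_step: "(norm (x (Suc k) \<omega> - xs))\<^sup>2 \<le> q0 * (norm (x k \<omega> - xs))\<^sup>2
      + cw * (norm (ghat blk \<psi> \<xi> S k (x k \<omega>) \<omega> - Gmap blk f (x k \<omega>)))\<^sup>2" if "\<omega> \<in> space M" for k \<omega>
    using nonexpansive_gradient_step_bound[where G = "Gmap blk f" and \<eta> = \<eta> and L = L, OF T_lip fixed]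
      that step_T xR B1 B2 xsR \<alpha>(1) constants(1)
    by (simp add: q0_def cw_def P_def)
  have "subalgebra M (natfilt M x k)" for k using x_meas by (intro subalgebra_natfilt)
  moreover have "(\<lambda>\<omega>. ghat blk \<psi> \<xi> S k (x k \<omega>) \<omega> - Gmap blk f (x k \<omega>)) \<in> borel_measurable M" for k
    using ghat_meas G_meas by (intro borel_measurable_diff) auto
  moreover have "0 < real (S k)" "1 / real (S k) \<le> \<alpha>\<^sup>2 * \<rho> ^ Suc k" for k
    using batch_size_bounds[OF \<alpha>(1) \<rho>(1)] by (simp_all add: S_def)
  ultimately have bound: "\<And>k. (\<integral>\<^sup>+\<omega>. ennreal ((norm (x k \<omega> - xs))\<^sup>2) \<partial>M)
      \<le> ennreal (lin_rec C q (cw * \<alpha>\<^sup>2 * (2 * \<nu>1\<^sup>2 * (norm xs)\<^sup>2 + \<nu>2\<^sup>2)) \<rho> k)"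
    using nn_integral_error_le_lin_rec[where X = x and F = "natfilt M x" and n = "\<lambda>k. real (S k)"
        and Z = "\<lambda>k \<omega>. ghat blk \<psi> \<xi> S k (x k \<omega>) \<omega> - Gmap blk f (x k \<omega>)" and \<beta> = "\<alpha>\<^sup>2",
        OF M _ x_meas _ one_step B3[rule_format] _ _ init _ constants(4) _ \<rho>(1) _ constants(7)]
      C \<rho>(2) constants(1)
    by (simp add: q0_def add_pos_nonneg less_imp_le)
  define K where "K = 2 * \<nu>1\<^sup>2 * (norm xs)\<^sup>2 + \<nu>2\<^sup>2"
  have V: "\<alpha>\<^sup>2 * \<nu>sq = (1 + 2 * \<alpha>\<^sup>2) * (\<alpha>\<^sup>2 * K)" by (simp add: \<nu>sq_def K_def algebra_simps)
  have K: "0 \<le> \<alpha>\<^sup>2 * K" by (simp add: K_def)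
  have "0 \<le> cw * \<alpha>\<^sup>2 * K" using constants(4) K by (simp add: mult.assoc)
  moreover have "cw * \<alpha>\<^sup>2 * K \<le> \<alpha>\<^sup>2 * \<nu>sq" "cw * \<alpha>\<^sup>2 * K \<le> \<alpha>\<^sup>2 * \<nu>sq * q"
    unfolding V using mult_right_mono[OF constants(5) K] mult_right_mono[OF constants(6) K]
    by (simp_all add: ac_simps)
  ultimately show ?thesis
    using ennreal_le_lin_rec_rates[OF bound[folded K_def] \<rho>(1) less_imp_le[OF \<rho>(2)] constants(2)
        less_imp_le[OF C]] constants(3)
    by auto
qed

end
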